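(* Let $0\le a\le A<B$ and consider the regression model $y(t)=\theta^Tf(t)+\epsilon(t)$ on $\mathcal{T}=[A,B]$, $\theta\in\mathbb{R}^m$ unknown, where $y$ and $y^{(1)}$ are observed on $[A,B]$ and the zero-mean errors have the integrated Brownian motion covariance kernel $$K(t,s)=\int_a^t\int_a^s\min(t',s')dt'ds'=\frac{\max(t,s)(\min(t,s)^2-a^2)}{2}-\frac{a^2(\min(t,s)-a)}{2}-\frac{\min(t,s)^3-a^3}{6}.$$ Suppose $f$ is four times differentiable on $[A,B]$. Define $\zeta_0(dt)=z_A\delta_A(dt)+z_B\delta_B(dt)+z(t)dt$ and $\zeta_1(dt)=z_{1,A}\delta_A(dt)+z_{1,B}\delta_B(dt)$, where $z(t)=f^{(4)}(t)$, $z_A=f^{(3)}(A)-\frac{6(A+a)}{(A+3a)(A-a)^2}f^{(1)}(A)+\frac{12A}{(A+3a)(A-a)^3}f(A)$, $z_{1,A}=-f^{(2)}(A)+\frac{4(A+2a)}{(A+3a)(A-a)}f^{(1)}(A)-\frac{6(A+a)}{(A+3a)(A-a)^2}f(A)$, $z_B=-f^{(3)}(B)$, $z_{1,B}=f^{(2)}(B)$. Assume $C=\int_A^Bf(t)\zeta_0^T(dt)+\int_{\mathcal{T}}f^{(1)}(t)\zeta_1^T(dt)$ is non-degenerate. Then $\hat\theta_{G_0,G_1}=\int_{\mathcal{T}}y(t)G_0(dt)+\int_{\mathcal{T}}y^{(1)}(t)G_1(dt)$ with $G_i=C^{-1}\zeta_i$ is a BLUE with covariance matrix $C^{-1}$.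
   Context: $\delta_A,\delta_B$ are Dirac measures. A BLUE is an unbiased estimator of the form $\int_{\mathcal{T}}y(t)H_0(dt)+\int_{\mathcal{T}}y^{(1)}(t)H_1(dt)$ ($H_i$ signed $\mathbb{R}^m$-valued measures) with minimal covariance matrix in Loewner order among such unbiased estimators. *)

theory Defs
  imports "HOL-Analysis.Analysis" "HOL-Probability.Giry_Monad"
begin

text \<open>An R^m-valued signed measure on T = [A,B] is represented as a finite list of
  components (mu, h), meaning H(dt) = sum of h(t) mu(dt), where mu is a (positive) Borel
  measure and h is an R^m-valued density that is mu-integrable on [A,B].  Every finite
  R^m-valued signed measure is of this form (polar decomposition), and finite sums of
  such objects (e.g. Dirac parts plus absolutely continuous parts) are again of this form.\<close>

type_synonym 'm vmeas = "(real measure \<times> (real \<Rightarrow> real^'m)) list"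

definition vmeas_ok :: "real \<Rightarrow> real \<Rightarrow> ('m::finite) vmeas \<Rightarrow> bool" where
  "vmeas_ok A B H \<longleftrightarrow>
     (\<forall>(\<mu>, h) \<in> set H. sets \<mu> = sets borel \<and> set_integrable \<mu> {A..B} h)"

definition vint :: "real \<Rightarrow> real \<Rightarrow> ('m::finite) vmeas \<Rightarrow> (real \<Rightarrow> real) \<Rightarrow> real^'m" where
  "vint A B H g = sum_list (map (\<lambda>(\<mu>, h). set_lebesgue_integral \<mu> {A..B} (\<lambda>t. g t *\<^sub>R h t)) H)"

definition vouter :: "real \<Rightarrow> real \<Rightarrow> (real \<Rightarrow> real^'m) \<Rightarrow> ('m::finite) vmeas \<Rightarrow> real^'m^'m" where
  "vouter A B f H = (\<chi> i. vint A B H (\<lambda>t. f t $ i))"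

definition mat_vmeas :: "real^'m^'m \<Rightarrow> ('m::finite) vmeas \<Rightarrow> 'm vmeas" where
  "mat_vmeas M H = map (\<lambda>(\<mu>, h). (\<mu>, \<lambda>t. M *v h t)) H"

definition K_ibm :: "real \<Rightarrow> real \<Rightarrow> real \<Rightarrow> real" where
  "K_ibm a t s = max t s * ((min t s)\<^sup>2 - a\<^sup>2) / 2 - a\<^sup>2 * (min t s - a) / 2
                 - ((min t s)^3 - a^3) / 6"

text \<open>Cov(eps(t), eps'(s)), Cov(eps'(t), eps(s)), Cov(eps'(t), eps'(s)) as derivatives of K\<close>
definition K_01 :: "real \<Rightarrow> real \<Rightarrow> real \<Rightarrow> real" where
  "K_01 a t s = deriv (\<lambda>v. K_ibm a t v) s"
definition K_10 :: "real \<Rightarrow> real \<Rightarrow> real \<Rightarrow> real" where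
  "K_10 a t s = deriv (\<lambda>u. K_ibm a u s) t"
definition K_11 :: "real \<Rightarrow> real \<Rightarrow> real \<Rightarrow> real" where
  "K_11 a t s = deriv (\<lambda>u. K_01 a u s) t"

text \<open>Cov(int p(t) H(dt), int q(s) G(ds)) as an m x m matrix, for a scalar kernel k = Cov(p(t),q(s))\<close>
definition ccov :: "real \<Rightarrow> real \<Rightarrow> (real \<Rightarrow> real \<Rightarrow> real) \<Rightarrow> ('m::finite) vmeas \<Rightarrow> 'm vmeas \<Rightarrow> real^'m^'m" where
  "ccov A B k H G = (\<chi> i j. sum_list (map (\<lambda>(\<mu>, h). sum_list (map (\<lambda>(\<nu>, g).
       set_lebesgue_integral \<mu> {A..B} (\<lambda>t. h t $ i *
          set_lebesgue_integral \<nu> {A..B} (\<lambda>s. k t s * g s $ j))) G)) H))"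

definition est_cov :: "real \<Rightarrow> real \<Rightarrow> real \<Rightarrow> ('m::finite) vmeas \<Rightarrow> 'm vmeas \<Rightarrow> real^'m^'m" where
  "est_cov a A B H0 H1 = ccov A B (K_ibm a) H0 H0 + ccov A B (K_01 a) H0 H1
                       + ccov A B (K_10 a) H1 H0 + ccov A B (K_11 a) H1 H1"

text \<open>Unbiasedness: E(theta_hat) = theta for all theta, where E y(t) = theta^T f(t), E y'(t) = theta^T f'(t)\<close>
definition unbiased :: "real \<Rightarrow> real \<Rightarrow> (real \<Rightarrow> real^'m) \<Rightarrow> (real \<Rightarrow> real^'m) \<Rightarrow> ('m::finite) vmeas \<Rightarrow> 'm vmeas \<Rightarrow> bool" where
  "unbiased A B f f1 H0 H1 \<longleftrightarrow>
     (\<forall>\<theta>::real^'m. vint A B H0 (\<lambda>t. \<theta> \<bullet> f t) + vint A B H1 (\<lambda>t. \<theta> \<bullet> f1 t) = \<theta>)"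

definition loewner_le :: "real^'m^'m \<Rightarrow> real^'m^'m \<Rightarrow> bool" where
  "loewner_le M N \<longleftrightarrow> (\<forall>v. v \<bullet> (M *v v) \<le> v \<bullet> (N *v v))"

definition is_BLUE :: "real \<Rightarrow> real \<Rightarrow> real \<Rightarrow> (real \<Rightarrow> real^'m) \<Rightarrow> (real \<Rightarrow> real^'m)
    \<Rightarrow> ('m::finite) vmeas \<Rightarrow> 'm vmeas \<Rightarrow> bool" where
  "is_BLUE a A B f f1 H0 H1 \<longleftrightarrow>
     vmeas_ok A B H0 \<and> vmeas_ok A B H1 \<and> unbiased A B f f1 H0 H1 \<and>
     (\<forall>G0 G1. vmeas_ok A B G0 \<and> vmeas_ok A B G1 \<and> unbiased A B f f1 G0 G1 \<longrightarrow>
        loewner_le (est_cov a A B H0 H1) (est_cov a A B G0 G1))"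

text \<open>The measures zeta_0, zeta_1; fd k is the k-th derivative of f\<close>
definition zeta0 :: "real \<Rightarrow> real \<Rightarrow> real \<Rightarrow> (nat \<Rightarrow> real \<Rightarrow> real^'m) \<Rightarrow> ('m::finite) vmeas" where
  "zeta0 a A B fd =
    [(return borel A, \<lambda>_. fd 3 A - (6 * (A + a) / ((A + 3 * a) * (A - a)\<^sup>2)) *\<^sub>R fd 1 A
                           + (12 * A / ((A + 3 * a) * (A - a)^3)) *\<^sub>R fd 0 A),
     (return borel B, \<lambda>_. - fd 3 B),
     (lborel, fd 4)]"

definition zeta1 :: "real \<Rightarrow> real \<Rightarrow> real \<Rightarrow> (nat \<Rightarrow> real \<Rightarrow> real^'m) \<Rightarrow> ('m::finite) vmeas" where
  "zeta1 a A B fd =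
    [(return borel A, \<lambda>_. - fd 2 A + (4 * (A + 2 * a) / ((A + 3 * a) * (A - a))) *\<^sub>R fd 1 A
                           - (6 * (A + a) / ((A + 3 * a) * (A - a)\<^sup>2)) *\<^sub>R fd 0 A),
     (return borel B, \<lambda>_. fd 2 B)]"

end

theory Submission
  imports Defs
begin

text \<open>For a Brownian motion W, the errors are eps(t) = \<integral>[0,t] (t - max u a) dW(u) and
  eps'(t) = W(t). Hence the estimator with weights H0, H1 has error \<integral> Psi(u) dW(u) with the feature
  Psi(u) = \<integral> (t - max u a)[u < t] H0(dt) + \<integral> [u < t] H1(dt), and its covariance matrix is the Gram
  matrix \<integral>[0,B] Psi Psi^T du. Four integrations by parts show that zeta reproduces the regressors:
  \<integral> K(t,s) zeta0(ds) + \<integral> K_01(t,s) zeta1(ds) = f(t), and likewise for f'. So the Gram matrix of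
  the features of any (G0, G1) and of (zeta0, zeta1) is \<integral> f dG0^T + \<integral> f' dG1^T, which is the
  identity when (G0, G1) is unbiased. For G* = C^-1 zeta the cross covariance with every unbiased G
  is therefore C^-1 = Cov(G*), and Cov(G) - C^-1 = \<integral> (Psi_G - Psi_G*) (Psi_G - Psi_G*)^T du is
  positive semidefinite.\<close>

section \<open>Bounded measurable functions and kernels\<close>

definition bounded_borel :: "(real \<Rightarrow> real) \<Rightarrow> bool" where
  "bounded_borel f \<longleftrightarrow> f \<in> borel_measurable borel \<and> (\<exists>N. \<forall>u. \<bar>f u\<bar> \<le> N)"

definition bounded_kernel :: "(real \<Rightarrow> real \<Rightarrow> real) \<Rightarrow> bool" where
  "bounded_kernel \<psi> \<longleftrightarrow>
     (\<lambda>(t, u). \<psi> t u) \<in> borel_measurable (borel \<Otimes>\<^sub>M borel) \<and> (\<exists>M. \<forall>t u. \<bar>\<psi> t u\<bar> \<le> M)"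

lemma bounded_borelI: "f \<in> borel_measurable borel \<Longrightarrow> (\<And>u. \<bar>f u\<bar> \<le> N) \<Longrightarrow> bounded_borel f"
  unfolding bounded_borel_def by blast

lemma bounded_borel_mult: "bounded_borel f \<Longrightarrow> bounded_borel g \<Longrightarrow> bounded_borel (\<lambda>u. f u * g u)"
  unfolding bounded_borel_def
proof (elim conjE exE, intro conjI)
  fix N M assume "\<forall>u. \<bar>f u\<bar> \<le> N" "\<forall>u. \<bar>g u\<bar> \<le> M"
  then show "\<exists>K. \<forall>u. \<bar>f u * g u\<bar> \<le> K"
    by (intro exI[of _ "N * M"] allI) (auto simp: abs_mult intro!: mult_mono)
qed (rule borel_measurable_times)

lemma bounded_borel_add: "bounded_borel f \<Longrightarrow> bounded_borel g \<Longrightarrow> bounded_borel (\<lambda>u. f u + g u)"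
  unfolding bounded_borel_def
proof (elim conjE exE, intro conjI)
  fix N M assume "\<forall>u. \<bar>f u\<bar> \<le> N" "\<forall>u. \<bar>g u\<bar> \<le> M"
  then show "\<exists>K. \<forall>u. \<bar>f u + g u\<bar> \<le> K"
    by (intro exI[of _ "N + M"] allI) (auto intro: order.trans[OF abs_triangle_ineq] add_mono)
qed (rule borel_measurable_add)

lemma bounded_borel_const: "bounded_borel (\<lambda>_. c)"
  by (rule bounded_borelI[of _ "\<bar>c\<bar>"]) auto

lemma bounded_borel_cmult: "bounded_borel f \<Longrightarrow> bounded_borel (\<lambda>u. c * f u)"
  using bounded_borel_mult[OF bounded_borel_const] by blast

lemma bounded_borel_sum:
  "finite K \<Longrightarrow> (\<And>k. k \<in> K \<Longrightarrow> bounded_borel (f k)) \<Longrightarrow> bounded_borel (\<lambda>u. \<Sum>k\<in>K. f k u)"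
  by (induction K rule: finite_induct) (auto intro: bounded_borel_add bounded_borel_const)

lemma bounded_borel_sum_list:
  "(\<And>x. x \<in> set xs \<Longrightarrow> bounded_borel (f x)) \<Longrightarrow> bounded_borel (\<lambda>u. \<Sum>x\<leftarrow>xs. f x u)"
  by (induction xs) (auto intro: bounded_borel_add bounded_borel_const)

lemma bounded_kernel_slices:
  assumes "bounded_kernel \<psi>"
  shows "bounded_borel (\<lambda>t. \<psi> t u)" "bounded_borel (\<lambda>u. \<psi> t u)"
proof -
  obtain M where m: "(\<lambda>(t, u). \<psi> t u) \<in> borel_measurable (borel \<Otimes>\<^sub>M borel)" and b: "\<And>t u. \<bar>\<psi> t u\<bar> \<le> M"
    using assms unfolding bounded_kernel_def by blast
  show "bounded_borel (\<lambda>t. \<psi> t u)" "bounded_borel (\<lambda>u. \<psi> t u)"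
    using measurable_compose[OF measurable_Pair2'[of u borel borel] m]
      measurable_compose[OF measurable_Pair1'[of t borel borel] m] b
    by (auto intro: bounded_borelI)
qed

lemma set_integrable_Icc_bounded:
  fixes f :: "real \<Rightarrow> real"
  assumes "f \<in> borel_measurable borel" and "\<And>u. u \<in> {c..d} \<Longrightarrow> \<bar>f u\<bar> \<le> M"
  shows "set_integrable lborel {c..d} f"
proof (rule set_integrable_bound[where f="\<lambda>_. M"])
  show "set_integrable lborel {c..d} (\<lambda>_. M)"
    unfolding set_integrable_def
    by (intro integrable_scaleR_left integrable_real_indicator) (auto simp: emeasure_lborel_Icc_eq)
  show "set_borel_measurable lborel {c..d} f"
    unfolding set_borel_measurable_def using assms(1) by measurable
  show "AE x\<in>{c..d} in lborel. norm (f x) \<le> norm M"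
    using assms(2) by (intro AE_I2) fastforce
qed

lemma set_integrable_bounded_borel: "bounded_borel f \<Longrightarrow> set_integrable lborel {c..d} f"
  unfolding bounded_borel_def by (auto intro: set_integrable_Icc_bounded)

lemma set_integral_add_bounded_borel:
  "bounded_borel f \<Longrightarrow> bounded_borel g \<Longrightarrow>
     (LINT u:{c..d}|lborel. f u + g u) = (LINT u:{c..d}|lborel. f u) + (LINT u:{c..d}|lborel. g u)"
  by (intro set_integral_add(2) set_integrable_bounded_borel)

lemma set_integral_sum_bounded_borel:
  "finite K \<Longrightarrow> (\<And>k. k \<in> K \<Longrightarrow> bounded_borel (f k)) \<Longrightarrow>
     (LINT u:{c..d}|lborel. \<Sum>k\<in>K. f k u) = (\<Sum>k\<in>K. LINT u:{c..d}|lborel. f k u)"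
  by (induction K rule: finite_induct) (simp_all add: set_integral_add_bounded_borel bounded_borel_sum)

lemma set_integral_sum_list_bounded_borel:
  "(\<And>x. x \<in> set xs \<Longrightarrow> bounded_borel (f x)) \<Longrightarrow>
     (LINT u:{c..d}|lborel. \<Sum>x\<leftarrow>xs. f x u) = (\<Sum>x\<leftarrow>xs. LINT u:{c..d}|lborel. f x u)"
  by (induction xs) (simp_all add: set_integral_add_bounded_borel bounded_borel_sum_list)

lemma set_integral_eq_has_integral_bounded:
  fixes f :: "real \<Rightarrow> real"
  assumes "f \<in> borel_measurable borel" and "\<And>u. \<bar>f u\<bar> \<le> M" and "(f has_integral v) {c..d}"
  shows "(LINT u:{c..d}|lborel. f u) = v"
proof -
  have "set_integrable lborel {c..d} f" using assms(1,2) by (intro set_integrable_Icc_bounded) auto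
  from set_borel_integral_eq_integral(2)[OF this] assms(3) show ?thesis by (simp add: integral_unique)
qed

lemma abs_set_integral_Icc_le:
  fixes f :: "real \<Rightarrow> real"
  assumes "f \<in> borel_measurable borel" and "\<And>u. \<bar>f u\<bar> \<le> K"
  shows "\<bar>LINT u:{0..C}|lborel. f u\<bar> \<le> K * \<bar>C\<bar>"
proof -
  have "set_integrable lborel {0..C} f" using assms by (intro set_integrable_Icc_bounded) auto
  from set_borel_integral_eq_integral[OF this]
  have "(f has_integral (LINT u:{0..C}|lborel. f u)) (cbox 0 C)" by (simp add: has_integral_integral)
  moreover have K: "0 \<le> K" using assms(2)[of 0] by linarith
  ultimately have "norm (LINT u:{0..C}|lborel. f u) \<le> K * measure lborel (cbox 0 C)"
    by (intro has_integral_bound[OF K]) (use assms(2) in auto)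
  also have "\<dots> \<le> K * \<bar>C\<bar>" using K by (intro mult_left_mono) auto
  finally show ?thesis by simp
qed

lemma set_integrable_scaleR_bounded_on:
  fixes f :: "real \<Rightarrow> 'b::{banach, second_countable_topology}"
  assumes sets: "sets M = sets borel" and f: "set_integrable M S f"
    and gm: "g \<in> borel_measurable borel" and gb: "\<And>s. s \<in> S \<Longrightarrow> \<bar>g s\<bar> \<le> C"
  shows "set_integrable M S (\<lambda>s. g s *\<^sub>R f s)"
proof (rule set_integrable_bound[where f="\<lambda>x. C *\<^sub>R f x"])
  show "set_integrable M S (\<lambda>x. C *\<^sub>R f x)"
    using f by (rule set_integrable_scaleR_right)
  have "(\<lambda>x. indicator S x *\<^sub>R f x) \<in> borel_measurable M"
    using f unfolding set_integrable_def by (rule borel_measurable_integrable)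
  moreover have "g \<in> borel_measurable M" using gm by (simp add: measurable_cong_sets[OF sets refl])
  ultimately have "(\<lambda>x. g x *\<^sub>R (indicator S x *\<^sub>R f x)) \<in> borel_measurable M"
    by (rule borel_measurable_scaleR[rotated])
  then show "set_borel_measurable M S (\<lambda>s. g s *\<^sub>R f s)"
    unfolding set_borel_measurable_def by (simp add: scaleR_left_commute mult.commute)
  show "AE x\<in>S in M. norm (g x *\<^sub>R f x) \<le> norm (C *\<^sub>R f x)"
    using gb by (intro AE_I2 impI) (simp add: mult_right_mono order_trans[OF _ abs_ge_self])
qed

lemma set_integrable_bounded_scaleR:
  fixes f :: "real \<Rightarrow> 'b::{banach, second_countable_topology}"
  assumes "sets M = sets borel" and "set_integrable M S f" and "bounded_borel g"
  shows "set_integrable M S (\<lambda>s. g s *\<^sub>R f s)"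
  using assms unfolding bounded_borel_def by (auto intro: set_integrable_scaleR_bounded_on)

lemma integrable_pair_finite_lborel_Icc:
  fixes \<rho> :: "real measure" and f :: "real \<Rightarrow> real \<Rightarrow> real"
  assumes fin: "finite_measure \<rho>" and sets: "sets \<rho> = sets borel"
    and fm: "(\<lambda>(t, u). f t u) \<in> borel_measurable (borel \<Otimes>\<^sub>M borel)"
    and fb: "\<And>t u. \<bar>f t u\<bar> \<le> K" and f0: "\<And>t u. u \<notin> {0..C} \<Longrightarrow> f t u = 0"
  shows "integrable (\<rho> \<Otimes>\<^sub>M lborel) (\<lambda>(t, u). f t u)"
proof (rule Bochner_Integration.integrable_bound[where f="\<lambda>x. K * indicator (UNIV \<times> {0..C}) x"])
  interpret \<rho>: finite_measure \<rho> by (rule fin)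
  have sp: "space \<rho> = UNIV" using sets_eq_imp_space_eq[OF sets] by simp
  have sP: "sets (\<rho> \<Otimes>\<^sub>M lborel) = sets (borel \<Otimes>\<^sub>M borel)"
    by (rule sets_pair_measure_cong[OF sets]) simp
  have "emeasure (\<rho> \<Otimes>\<^sub>M lborel) (UNIV \<times> {0..C}) = emeasure \<rho> UNIV * emeasure lborel {0..C}"
    by (metis lborel.emeasure_pair_measure_Times sets.top sets_lborel sp atLeastAtMost_borel)
  also have "\<dots> < \<infinity>"
    using \<rho>.emeasure_finite[of UNIV]
    by (simp add: emeasure_lborel_Icc_eq ennreal_mult_eq_top_iff less_top[symmetric])
  finally show "integrable (\<rho> \<Otimes>\<^sub>M lborel) (\<lambda>x. K * indicator (UNIV \<times> {0..C}) x)"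
    using sP sp by (intro integrable_mult_right integrable_real_indicator)
      (auto simp: sets_pair_measure_cong[OF sets] intro!: pair_measureI)
  show "(\<lambda>(t, u). f t u) \<in> borel_measurable (\<rho> \<Otimes>\<^sub>M lborel)"
    using fm by (simp add: measurable_cong_sets[OF sP refl])
  have "\<bar>f t u\<bar> \<le> \<bar>K * indicator (UNIV \<times> {0..C}) (t, u)\<bar>" for t u
    using fb[of t u] f0[of u t] by (auto simp: indicator_def)
  then show "AE x in \<rho> \<Otimes>\<^sub>M lborel. norm ((\<lambda>(t, u). f t u) x) \<le> norm (K * indicator (UNIV \<times> {0..C}) x)"
    by (intro AE_I2) (auto split: prod.split)
qed

lemma finite_measure_lborel_integral_swap:
  fixes \<rho> :: "real measure" and \<sigma> G :: "real \<Rightarrow> real" and \<psi> :: "real \<Rightarrow> real \<Rightarrow> real"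
  assumes fin: "finite_measure \<rho>" and sets: "sets \<rho> = sets borel"
    and \<sigma>: "bounded_borel \<sigma>" and \<psi>: "bounded_kernel \<psi>" and G: "bounded_borel G"
  shows "(LINT t|\<rho>. \<sigma> t * (LINT u:{0..C}|lborel. \<psi> t u * G u))
       = (LINT u:{0..C}|lborel. G u * (LINT t|\<rho>. \<sigma> t * \<psi> t u))"
proof -
  interpret \<rho>: finite_measure \<rho> by (rule fin)
  interpret P: pair_sigma_finite \<rho> lborel
    by (simp add: pair_sigma_finite_def \<rho>.sigma_finite_measure_axioms lborel.sigma_finite_measure_axioms)
  obtain L where \<sigma>m: "\<sigma> \<in> borel_measurable borel" and \<sigma>b: "\<And>t. \<bar>\<sigma> t\<bar> \<le> L"
    using \<sigma> unfolding bounded_borel_def by blast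
  obtain M where \<psi>m: "(\<lambda>(t, u). \<psi> t u) \<in> borel_measurable (borel \<Otimes>\<^sub>M borel)" and \<psi>b: "\<And>t u. \<bar>\<psi> t u\<bar> \<le> M"
    using \<psi> unfolding bounded_kernel_def by blast
  obtain N where Gm: "G \<in> borel_measurable borel" and Gb: "\<And>u. \<bar>G u\<bar> \<le> N"
    using G unfolding bounded_borel_def by blast
  define f where "f t u = \<sigma> t * indicator {0..C} u * \<psi> t u * G u" for t u
  have "integrable (\<rho> \<Otimes>\<^sub>M lborel) (\<lambda>(t, u). f t u)"
  proof (rule integrable_pair_finite_lborel_Icc[where C=C, OF fin sets])
    show "(\<lambda>(t, u). f t u) \<in> borel_measurable (borel \<Otimes>\<^sub>M borel)"
      unfolding f_def using \<psi>m \<sigma>m Gm by measurable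
    have "0 \<le> L" "0 \<le> M" using \<sigma>b[of 0] \<psi>b[of 0 0] by linarith+
    then show "\<bar>f t u\<bar> \<le> L * M * N" for t u
      unfolding f_def abs_mult by (intro mult_mono) (simp_all add: \<sigma>b \<psi>b Gb indicator_def)
  qed (simp add: f_def)
  from P.Fubini_integral[OF this]
  have "(LINT u|lborel. LINT t|\<rho>. f t u) = (LINT t|\<rho>. LINT u|lborel. f t u)" .
  moreover have "(LINT u|lborel. f t u) = \<sigma> t * (LINT u:{0..C}|lborel. \<psi> t u * G u)" for t
  proof -
    have "(LINT u|lborel. f t u) = (LINT u|lborel. \<sigma> t * (indicator {0..C} u * (\<psi> t u * G u)))"
      by (simp add: f_def mult_ac)
    also have "\<dots> = \<sigma> t * (LINT u:{0..C}|lborel. \<psi> t u * G u)"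
      unfolding set_lebesgue_integral_def by (simp only: integral_mult_right_zero real_scaleR_def)
    finally show ?thesis .
  qed
  moreover have "(LINT t|\<rho>. f t u) = indicator {0..C} u * (G u * (LINT t|\<rho>. \<sigma> t * \<psi> t u))" for u
  proof -
    have "(LINT t|\<rho>. f t u) = (LINT t|\<rho>. (indicator {0..C} u * G u) * (\<sigma> t * \<psi> t u))"
      by (simp add: f_def mult_ac)
    also have "\<dots> = indicator {0..C} u * (G u * (LINT t|\<rho>. \<sigma> t * \<psi> t u))"
      by (simp only: integral_mult_right_zero mult.assoc)
    finally show ?thesis .
  qed
  ultimately show ?thesis by (simp add: set_lebesgue_integral_def)
qed

text \<open>A Borel measure \<mu> need not be \<sigma>-finite, so Fubini is applied to the finite measure
  \<open>abs_density A B \<mu> h\<close> = |h| \<mu> restricted to [A, B], with the sign of h moved into the integrand.\<close>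

definition abs_density :: "real \<Rightarrow> real \<Rightarrow> real measure \<Rightarrow> (real \<Rightarrow> real) \<Rightarrow> real measure" where
  "abs_density A B \<mu> h = density \<mu> (\<lambda>t. ennreal \<bar>indicator {A..B} t * h t\<bar>)"

lemma
  fixes h :: "real \<Rightarrow> real"
  assumes sets: "sets \<mu> = sets borel" and h: "set_integrable \<mu> {A..B} h"
  shows finite_measure_abs_density: "finite_measure (abs_density A B \<mu> h)"
    and sets_abs_density: "sets (abs_density A B \<mu> h) = sets borel"
    and bounded_borel_sgn_restrict: "bounded_borel (\<lambda>t. sgn (indicator {A..B} t * h t))"
proof -
  have hm: "(\<lambda>t. indicator {A..B} t * h t) \<in> borel_measurable borel"
    using h unfolding set_integrable_def
    by (simp add: measurable_cong_sets[OF sets refl, symmetric] borel_measurable_integrable)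
  show "sets (abs_density A B \<mu> h) = sets borel" by (simp add: abs_density_def sets)
  have "(\<lambda>t. sgn (indicator {A..B} t * h t)) \<in> borel_measurable borel" using hm by measurable
  then show "bounded_borel (\<lambda>t. sgn (indicator {A..B} t * h t))"
    by (rule bounded_borelI[where N=1]) (simp add: abs_sgn_eq)
  have "integrable \<mu> (\<lambda>t. indicator {A..B} t * h t)" using h unfolding set_integrable_def by simp
  then have "(\<integral>\<^sup>+ t. ennreal (norm (indicator {A..B} t * h t)) \<partial>\<mu>) < \<infinity>"
    by (simp add: integrable_iff_bounded)
  then have "emeasure (abs_density A B \<mu> h) (space (abs_density A B \<mu> h)) \<noteq> \<infinity>"
    unfolding abs_density_def using hm
    by (subst emeasure_density) (auto simp: measurable_cong_sets[OF sets refl] less_top)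
  then show "finite_measure (abs_density A B \<mu> h)" by (rule finite_measureI)
qed

lemma set_integral_abs_density:
  fixes h F :: "real \<Rightarrow> real"
  assumes sets: "sets \<mu> = sets borel" and h: "set_integrable \<mu> {A..B} h"
    and F: "F \<in> borel_measurable borel"
  shows "(LINT t:{A..B}|\<mu>. F t * h t) = (LINT t|abs_density A B \<mu> h. sgn (indicator {A..B} t * h t) * F t)"
proof -
  have hm: "(\<lambda>t. indicator {A..B} t * h t) \<in> borel_measurable \<mu>"
    using h unfolding set_integrable_def by (simp add: borel_measurable_integrable)
  have Fm: "F \<in> borel_measurable \<mu>" using F by (simp add: measurable_cong_sets[OF sets refl])
  have "(LINT t|abs_density A B \<mu> h. sgn (indicator {A..B} t * h t) * F t)
      = (LINT t|\<mu>. \<bar>indicator {A..B} t * h t\<bar> * (sgn (indicator {A..B} t * h t) * F t))"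
    unfolding abs_density_def
  proof (rule integral_real_density)
    show "(\<lambda>t. \<bar>indicator {A..B} t * h t\<bar>) \<in> borel_measurable \<mu>" using hm by measurable
    show "(\<lambda>t. sgn (indicator {A..B} t * h t) * F t) \<in> borel_measurable \<mu>" using hm Fm by measurable
  qed simp
  also have "\<dots> = (LINT t:{A..B}|\<mu>. F t * h t)"
    unfolding set_lebesgue_integral_def
    by (intro Bochner_Integration.integral_cong refl) (auto simp: indicator_def abs_mult_sgn mult_ac)
  finally show ?thesis by simp
qed

lemma bounded_borel_set_integral_kernel_left:
  assumes \<psi>: "bounded_kernel \<psi>" and G: "bounded_borel G"
  shows "bounded_borel (\<lambda>t. LINT u:{0..C}|lborel. \<psi> t u * G u)"
proof -
  obtain M where \<psi>m: "(\<lambda>(t, u). \<psi> t u) \<in> borel_measurable (borel \<Otimes>\<^sub>M borel)" and \<psi>b: "\<And>t u. \<bar>\<psi> t u\<bar> \<le> M"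
    using \<psi> unfolding bounded_kernel_def by blast
  obtain N where Gm: "G \<in> borel_measurable borel" and Gb: "\<And>u. \<bar>G u\<bar> \<le> N"
    using G unfolding bounded_borel_def by blast
  have s: "sets (borel \<Otimes>\<^sub>M lborel) = sets (borel \<Otimes>\<^sub>M (borel :: real measure))"
    by (rule sets_pair_measure_cong) auto
  have "(\<lambda>(t, u). indicator {0..C} u *\<^sub>R (\<psi> t u * G u)) \<in> borel_measurable (borel \<Otimes>\<^sub>M lborel)"
    unfolding measurable_cong_sets[OF s refl] using \<psi>m Gm by measurable
  then have "(\<lambda>t. LINT u:{0..C}|lborel. \<psi> t u * G u) \<in> borel_measurable borel"
    unfolding set_lebesgue_integral_def by (rule lborel.borel_measurable_lebesgue_integral)
  moreover have "\<bar>LINT u:{0..C}|lborel. \<psi> t u * G u\<bar> \<le> M * N * \<bar>C\<bar>" for t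
  proof (rule abs_set_integral_Icc_le)
    show "(\<lambda>u. \<psi> t u * G u) \<in> borel_measurable borel"
      using bounded_borel_mult[OF bounded_kernel_slices(2)[OF \<psi>] G] unfolding bounded_borel_def by blast
    have "0 \<le> M" using \<psi>b[of 0 0] by linarith
    then show "\<bar>\<psi> t u * G u\<bar> \<le> M * N" for u unfolding abs_mult by (intro mult_mono) (simp_all add: \<psi>b Gb)
  qed
  ultimately show ?thesis by (rule bounded_borelI)
qed

lemma bounded_borel_set_integral_kernel_right:
  fixes h :: "real \<Rightarrow> real"
  assumes sets: "sets \<mu> = sets borel" and h: "set_integrable \<mu> {A..B} h" and \<psi>: "bounded_kernel \<psi>"
  shows "bounded_borel (\<lambda>u. LINT t:{A..B}|\<mu>. \<psi> t u * h t)"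
proof -
  let ?\<rho> = "abs_density A B \<mu> h" and ?s = "\<lambda>t. sgn (indicator {A..B} t * h t)"
  interpret \<rho>: finite_measure ?\<rho> by (rule finite_measure_abs_density[OF sets h])
  obtain M where \<psi>m: "(\<lambda>(t, u). \<psi> t u) \<in> borel_measurable (borel \<Otimes>\<^sub>M borel)" and \<psi>b: "\<And>t u. \<bar>\<psi> t u\<bar> \<le> M"
    using \<psi> unfolding bounded_kernel_def by blast
  have sm: "?s \<in> borel_measurable borel" and sb: "\<bar>?s t\<bar> \<le> 1" for t
    using bounded_borel_sgn_restrict[OF sets h] by (auto simp: bounded_borel_def abs_sgn_eq)
  have eq: "(LINT t:{A..B}|\<mu>. \<psi> t u * h t) = (LINT t|?\<rho>. ?s t * \<psi> t u)" for u
    using set_integral_abs_density[OF sets h] bounded_kernel_slices(1)[OF \<psi>]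
    unfolding bounded_borel_def by blast
  have s: "sets (borel \<Otimes>\<^sub>M ?\<rho>) = sets (borel \<Otimes>\<^sub>M (borel :: real measure))"
    by (rule sets_pair_measure_cong) (auto simp: sets_abs_density[OF sets h])
  have "(\<lambda>(u, t). ?s t * \<psi> t u) \<in> borel_measurable (borel \<Otimes>\<^sub>M ?\<rho>)"
    unfolding measurable_cong_sets[OF s refl] using sm \<psi>m by measurable
  then have "(\<lambda>u. LINT t:{A..B}|\<mu>. \<psi> t u * h t) \<in> borel_measurable borel"
    unfolding eq by (rule \<rho>.borel_measurable_lebesgue_integral)
  moreover have "\<bar>LINT t:{A..B}|\<mu>. \<psi> t u * h t\<bar> \<le> M * measure ?\<rho> (space ?\<rho>)" for u
  proof -
    have bnd: "\<bar>?s t * \<psi> t u\<bar> \<le> M" for t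
      using mult_mono[OF sb[of t] \<psi>b[of t u]] by (simp add: abs_mult)
    have "(\<lambda>t. \<psi> t u) \<in> borel_measurable borel"
      using bounded_kernel_slices(1)[OF \<psi>] unfolding bounded_borel_def by blast
    then have "(\<lambda>t. ?s t * \<psi> t u) \<in> borel_measurable ?\<rho>"
      unfolding measurable_cong_sets[OF sets_abs_density[OF sets h] refl] using sm by measurable
    then have "integrable ?\<rho> (\<lambda>t. ?s t * \<psi> t u)"
      using bnd by (intro \<rho>.integrable_const_bound[where B=M]) auto
    then have "norm (LINT t|?\<rho>. ?s t * \<psi> t u) \<le> (LINT t|?\<rho>. M)"
      using bnd by (intro Bochner_Integration.integral_norm_bound_integral) auto
    then show ?thesis unfolding eq by (simp add: mult.commute)
  qed
  ultimately show ?thesis by (rule bounded_borelI)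
qed

lemma set_integral_lborel_swap:
  fixes h G :: "real \<Rightarrow> real" and \<psi> :: "real \<Rightarrow> real \<Rightarrow> real"
  assumes sets: "sets \<mu> = sets borel" and h: "set_integrable \<mu> {A..B} h"
    and \<psi>: "bounded_kernel \<psi>" and G: "bounded_borel G"
  shows "(LINT t:{A..B}|\<mu>. h t * (LINT u:{0..C}|lborel. \<psi> t u * G u))
       = (LINT u:{0..C}|lborel. G u * (LINT t:{A..B}|\<mu>. \<psi> t u * h t))"
proof -
  let ?\<rho> = "abs_density A B \<mu> h" and ?s = "\<lambda>t. sgn (indicator {A..B} t * h t)"
  have "(\<lambda>t. LINT u:{0..C}|lborel. \<psi> t u * G u) \<in> borel_measurable borel"
    using bounded_borel_set_integral_kernel_left[OF \<psi> G] unfolding bounded_borel_def by blast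
  from set_integral_abs_density[OF sets h this]
  have "(LINT t:{A..B}|\<mu>. h t * (LINT u:{0..C}|lborel. \<psi> t u * G u))
      = (LINT t|?\<rho>. ?s t * (LINT u:{0..C}|lborel. \<psi> t u * G u))"
    by (simp only: mult.commute)
  also have "\<dots> = (LINT u:{0..C}|lborel. G u * (LINT t|?\<rho>. ?s t * \<psi> t u))"
    by (rule finite_measure_lborel_integral_swap[OF finite_measure_abs_density[OF sets h]
          sets_abs_density[OF sets h] bounded_borel_sgn_restrict[OF sets h] \<psi> G])
  also have "\<dots> = (LINT u:{0..C}|lborel. G u * (LINT t:{A..B}|\<mu>. \<psi> t u * h t))"
    using set_integral_abs_density[OF sets h] bounded_kernel_slices(1)[OF \<psi>]
    unfolding bounded_borel_def by simp
  finally show ?thesis .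
qed

section \<open>Integrals against vector measures\<close>

lemma vmeas_ok_Nil [simp]: "vmeas_ok A B []"
  by (simp add: vmeas_ok_def)

lemma vmeas_ok_Cons [simp]:
  "vmeas_ok A B ((\<mu>, h) # D) \<longleftrightarrow> sets \<mu> = sets borel \<and> set_integrable \<mu> {A..B} h \<and> vmeas_ok A B D"
  by (auto simp: vmeas_ok_def)

lemma vint_Nil [simp]: "vint A B [] F = 0"
  by (simp add: vint_def)

lemma vint_Cons [simp]: "vint A B ((\<mu>, h) # D) F = (LINT t:{A..B}|\<mu>. F t *\<^sub>R h t) + vint A B D F"
  by (simp add: vint_def)

lemma vmeas_ok_memE:
  assumes "vmeas_ok A B D" "x \<in> set D"
  obtains \<mu> h where "x = (\<mu>, h)" "sets \<mu> = sets borel" "set_integrable \<mu> {A..B} h"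
  using assms unfolding vmeas_ok_def by (cases x) auto

lemma set_integrable_component:
  fixes f :: "real \<Rightarrow> real^'m::finite"
  assumes "set_integrable M S f"
  shows "set_integrable M S (\<lambda>t. f t $ i)"
  using integrable_bounded_linear[OF bounded_linear_vec_nth[of i] assms[unfolded set_integrable_def]]
  unfolding set_integrable_def by simp

lemma set_integral_component:
  fixes f :: "real \<Rightarrow> real^'m::finite"
  assumes "set_integrable M S f"
  shows "(LINT t:S|M. f t) $ i = (LINT t:S|M. f t $ i)"
  using integral_bounded_linear[OF bounded_linear_vec_nth[of i] assms[unfolded set_integrable_def]]
  unfolding set_lebesgue_integral_def by simp

lemma vint_cong:
  assumes "vmeas_ok A B D" "\<And>t. t \<in> {A..B} \<Longrightarrow> F t = G t"
  shows "vint A B D F = vint A B D G"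
  using assms(1)
proof (induction D)
  case (Cons x D)
  then obtain \<mu> h where "x = (\<mu>, h)" "sets \<mu> = sets borel" "vmeas_ok A B D" by (cases x) auto
  with Cons.IH assms(2) show ?case by (auto intro: set_lebesgue_integral_cong)
qed simp

lemma vint_component:
  fixes D :: "('m::finite) vmeas"
  assumes "vmeas_ok A B D" "bounded_borel F"
  shows "vint A B D F $ i = (\<Sum>(\<mu>, h)\<leftarrow>D. LINT t:{A..B}|\<mu>. F t * h t $ i)"
  using assms(1)
proof (induction D)
  case (Cons x D)
  then obtain \<mu> h where x: "x = (\<mu>, h)" "sets \<mu> = sets borel" "set_integrable \<mu> {A..B} h" "vmeas_ok A B D"
    by (cases x) auto
  have "set_integrable \<mu> {A..B} (\<lambda>t. F t *\<^sub>R h t)"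
    by (rule set_integrable_bounded_scaleR[OF x(2,3) assms(2)])
  with Cons.IH[OF x(4)] show ?case by (simp add: x(1) set_integral_component)
qed simp

lemma vint_cmult: "vint A B D (\<lambda>t. c * F t) = c *\<^sub>R vint A B D F"
proof (induction D)
  case (Cons x D)
  then show ?case by (cases x) (simp add: scaleR_right_distrib flip: scaleR_scaleR)
qed simp

lemma vint_add:
  fixes D :: "('m::finite) vmeas"
  assumes "vmeas_ok A B D" "bounded_borel F" "bounded_borel G"
  shows "vint A B D (\<lambda>t. F t + G t) = vint A B D F + vint A B D G"
  using assms(1)
proof (induction D)
  case (Cons x D)
  then obtain \<mu> h where x: "x = (\<mu>, h)" "sets \<mu> = sets borel" "set_integrable \<mu> {A..B} h" "vmeas_ok A B D"
    by (cases x) auto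
  have "set_integrable \<mu> {A..B} (\<lambda>t. F t *\<^sub>R h t)" "set_integrable \<mu> {A..B} (\<lambda>t. G t *\<^sub>R h t)"
    by (intro set_integrable_bounded_scaleR[OF x(2,3)] assms(2,3))+
  from set_integral_add(2)[OF this] Cons.IH[OF x(4)] show ?case
    by (simp add: x(1) scaleR_add_left algebra_simps)
qed simp

lemma vint_sum:
  fixes D :: "('m::finite) vmeas"
  assumes "vmeas_ok A B D" "finite K" "\<And>k. k \<in> K \<Longrightarrow> bounded_borel (F k)"
  shows "vint A B D (\<lambda>t. \<Sum>k\<in>K. F k t) = (\<Sum>k\<in>K. vint A B D (F k))"
  using assms(2,3)
proof (induction K rule: finite_induct)
  case empty
  show ?case using vint_cmult[of A B D 0 "\<lambda>_. 0"] by simp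
next
  case (insert x F')
  then show ?case by (simp add: vint_add[OF assms(1) _ bounded_borel_sum])
qed

lemma bounded_borel_vmeas_entry_kernel:
  fixes D :: "('m::finite) vmeas"
  assumes "vmeas_ok A B D" "x \<in> set D" and \<psi>: "bounded_kernel \<psi>"
  shows "bounded_borel (\<lambda>u. case x of (\<mu>, h) \<Rightarrow> LINT t:{A..B}|\<mu>. \<psi> t u * h t $ i)"
proof -
  from assms(1,2) obtain \<mu> h where "x = (\<mu>, h)" "sets \<mu> = sets borel" "set_integrable \<mu> {A..B} h"
    by (rule vmeas_ok_memE)
  then show ?thesis
    using bounded_borel_set_integral_kernel_right[OF _ set_integrable_component \<psi>] by simp
qed

lemma bounded_borel_vint_kernel:
  fixes D :: "('m::finite) vmeas"
  assumes D: "vmeas_ok A B D" and \<psi>: "bounded_kernel \<psi>"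
  shows "bounded_borel (\<lambda>u. vint A B D (\<lambda>t. \<psi> t u) $ i)"
  using bounded_borel_sum_list[OF bounded_borel_vmeas_entry_kernel[OF D _ \<psi>]]
  by (simp add: vint_component[OF D bounded_kernel_slices(1)[OF \<psi>]] case_prod_beta')

lemma vint_lborel_swap:
  fixes D :: "('m::finite) vmeas"
  assumes D: "vmeas_ok A B D" and \<psi>: "bounded_kernel \<psi>" and G: "bounded_borel G"
  shows "vint A B D (\<lambda>t. LINT u:{0..C}|lborel. \<psi> t u * G u) $ i
       = (LINT u:{0..C}|lborel. G u * vint A B D (\<lambda>t. \<psi> t u) $ i)"
proof -
  define d where "d x u = (case x of (\<mu>, h) \<Rightarrow> LINT t:{A..B}|\<mu>. \<psi> t u * h t $ i)" for x u
  have d: "bounded_borel (d x)" if "x \<in> set D" for x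
    unfolding d_def by (rule bounded_borel_vmeas_entry_kernel[OF D that \<psi>])
  have "vint A B D (\<lambda>t. LINT u:{0..C}|lborel. \<psi> t u * G u) $ i
      = (\<Sum>x\<leftarrow>D. LINT u:{0..C}|lborel. G u * d x u)"
    unfolding vint_component[OF D bounded_borel_set_integral_kernel_left[OF \<psi> G]]
  proof (intro arg_cong[where f=sum_list] map_cong refl)
    fix x assume "x \<in> set D"
    with D obtain \<mu> h where x: "x = (\<mu>, h)" "sets \<mu> = sets borel" "set_integrable \<mu> {A..B} h"
      by (rule vmeas_ok_memE)
    show "(case x of (\<mu>, h) \<Rightarrow> LINT t:{A..B}|\<mu>. (LINT u:{0..C}|lborel. \<psi> t u * G u) * h t $ i)
        = (LINT u:{0..C}|lborel. G u * d x u)"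
      using set_integral_lborel_swap[OF x(2) set_integrable_component[OF x(3)] \<psi> G]
      by (simp add: x(1) d_def mult.commute)
  qed
  also have "\<dots> = (LINT u:{0..C}|lborel. \<Sum>x\<leftarrow>D. G u * d x u)"
    by (rule set_integral_sum_list_bounded_borel[symmetric]) (intro bounded_borel_mult G d)
  also have "\<dots> = (LINT u:{0..C}|lborel. G u * vint A B D (\<lambda>t. \<psi> t u) $ i)"
    by (simp add: vint_component[OF D bounded_kernel_slices(1)[OF \<psi>]] d_def case_prod_beta'
        sum_list_const_mult)
  finally show ?thesis .
qed

lemma double_set_integral_factorized_kernel:
  fixes h g :: "real \<Rightarrow> real" and \<psi>1 \<psi>2 k :: "real \<Rightarrow> real \<Rightarrow> real"
  assumes \<mu>: "sets \<mu> = sets borel" "set_integrable \<mu> {A..B} h"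
    and \<nu>: "sets \<nu> = sets borel" "set_integrable \<nu> {A..B} g"
    and \<psi>1: "bounded_kernel \<psi>1" and \<psi>2: "bounded_kernel \<psi>2"
    and k: "\<And>t s. t \<in> {A..B} \<Longrightarrow> s \<in> {A..B} \<Longrightarrow> k t s = (LINT u:{0..C}|lborel. \<psi>1 t u * \<psi>2 s u)"
  shows "(LINT t:{A..B}|\<mu>. h t * (LINT s:{A..B}|\<nu>. k t s * g s))
       = (LINT u:{0..C}|lborel. (LINT t:{A..B}|\<mu>. \<psi>1 t u * h t) * (LINT s:{A..B}|\<nu>. \<psi>2 s u * g s))"
proof -
  define e where "e u = (LINT s:{A..B}|\<nu>. \<psi>2 s u * g s)" for u
  have e: "bounded_borel e"
    unfolding e_def[abs_def] by (rule bounded_borel_set_integral_kernel_right[OF \<nu> \<psi>2])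
  have inner: "(LINT s:{A..B}|\<nu>. k t s * g s) = (LINT u:{0..C}|lborel. \<psi>1 t u * e u)"
    if "t \<in> {A..B}" for t
  proof -
    have "(LINT s:{A..B}|\<nu>. k t s * g s) = (LINT s:{A..B}|\<nu>. g s * (LINT u:{0..C}|lborel. \<psi>2 s u * \<psi>1 t u))"
      using that \<nu>(1) by (intro set_lebesgue_integral_cong) (auto simp: k mult.commute)
    also have "\<dots> = (LINT u:{0..C}|lborel. \<psi>1 t u * e u)"
      unfolding e_def by (rule set_integral_lborel_swap[OF \<nu> \<psi>2 bounded_kernel_slices(2)[OF \<psi>1]])
    finally show ?thesis .
  qed
  have "(LINT t:{A..B}|\<mu>. h t * (LINT s:{A..B}|\<nu>. k t s * g s))
      = (LINT t:{A..B}|\<mu>. h t * (LINT u:{0..C}|lborel. \<psi>1 t u * e u))"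
    using \<mu>(1) by (intro set_lebesgue_integral_cong) (auto simp: inner)
  also have "\<dots> = (LINT u:{0..C}|lborel. e u * (LINT t:{A..B}|\<mu>. \<psi>1 t u * h t))"
    by (rule set_integral_lborel_swap[OF \<mu> \<psi>1 e])
  finally show ?thesis by (simp add: e_def mult.commute)
qed

lemma ccov_factorized_kernel:
  fixes D E :: "('m::finite) vmeas" and \<psi>1 \<psi>2 k :: "real \<Rightarrow> real \<Rightarrow> real"
  assumes D: "vmeas_ok A B D" and E: "vmeas_ok A B E"
    and \<psi>1: "bounded_kernel \<psi>1" and \<psi>2: "bounded_kernel \<psi>2"
    and k: "\<And>t s. t \<in> {A..B} \<Longrightarrow> s \<in> {A..B} \<Longrightarrow> k t s = (LINT u:{0..C}|lborel. \<psi>1 t u * \<psi>2 s u)"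
  shows "ccov A B k D E $ i $ j
       = (LINT u:{0..C}|lborel. vint A B D (\<lambda>t. \<psi>1 t u) $ i * vint A B E (\<lambda>s. \<psi>2 s u) $ j)"
proof -
  define d where "d x u = (case x of (\<mu>, h) \<Rightarrow> LINT t:{A..B}|\<mu>. \<psi>1 t u * h t $ i)" for x u
  define e where "e y u = (case y of (\<nu>, g) \<Rightarrow> LINT s:{A..B}|\<nu>. \<psi>2 s u * g s $ j)" for y u
  have d: "bounded_borel (d x)" if "x \<in> set D" for x
    unfolding d_def by (rule bounded_borel_vmeas_entry_kernel[OF D that \<psi>1])
  have e: "bounded_borel (e y)" if "y \<in> set E" for y
    unfolding e_def by (rule bounded_borel_vmeas_entry_kernel[OF E that \<psi>2])
  have "ccov A B k D E $ i $ j = (\<Sum>x\<leftarrow>D. \<Sum>y\<leftarrow>E. LINT u:{0..C}|lborel. d x u * e y u)"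
    unfolding ccov_def vec_lambda_beta
  proof (intro arg_cong[where f=sum_list] map_cong refl)
    fix x assume "x \<in> set D"
    with D obtain \<mu> h where x: "x = (\<mu>, h)" "sets \<mu> = sets borel" "set_integrable \<mu> {A..B} h"
      by (rule vmeas_ok_memE)
    show "(case x of (\<mu>, h) \<Rightarrow> (\<Sum>(\<nu>, g)\<leftarrow>E. LINT t:{A..B}|\<mu>. h t $ i * (LINT s:{A..B}|\<nu>. k t s * g s $ j)))
        = (\<Sum>y\<leftarrow>E. LINT u:{0..C}|lborel. d x u * e y u)"
      unfolding x(1) prod.case
    proof (intro arg_cong[where f=sum_list] map_cong refl)
      fix y assume "y \<in> set E"
      with E obtain \<nu> g where y: "y = (\<nu>, g)" "sets \<nu> = sets borel" "set_integrable \<nu> {A..B} g"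
        by (rule vmeas_ok_memE)
      show "(case y of (\<nu>, g) \<Rightarrow> LINT t:{A..B}|\<mu>. h t $ i * (LINT s:{A..B}|\<nu>. k t s * g s $ j))
          = (LINT u:{0..C}|lborel. d (\<mu>, h) u * e y u)"
        using double_set_integral_factorized_kernel[OF x(2) set_integrable_component[OF x(3)]
            y(2) set_integrable_component[OF y(3)] \<psi>1 \<psi>2 k]
        by (simp add: y(1) d_def e_def)
    qed
  qed
  also have "\<dots> = (\<Sum>x\<leftarrow>D. LINT u:{0..C}|lborel. \<Sum>y\<leftarrow>E. d x u * e y u)"
    by (intro arg_cong[where f=sum_list] map_cong refl set_integral_sum_list_bounded_borel[symmetric]
        bounded_borel_mult d e) auto
  also have "\<dots> = (LINT u:{0..C}|lborel. \<Sum>x\<leftarrow>D. \<Sum>y\<leftarrow>E. d x u * e y u)"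
    by (rule set_integral_sum_list_bounded_borel[symmetric])
      (intro bounded_borel_sum_list bounded_borel_mult d e; simp)
  also have "\<dots> = (LINT u:{0..C}|lborel. vint A B D (\<lambda>t. \<psi>1 t u) $ i * vint A B E (\<lambda>s. \<psi>2 s u) $ j)"
    by (simp add: vint_component[OF D bounded_kernel_slices(1)[OF \<psi>1]]
        vint_component[OF E bounded_kernel_slices(1)[OF \<psi>2]] d_def e_def case_prod_beta'
        sum_list_const_mult sum_list_mult_const)
  finally show ?thesis .
qed

lemma vmeas_ok_mat_vmeas:
  fixes D :: "('m::finite) vmeas"
  assumes "vmeas_ok A B D"
  shows "vmeas_ok A B (mat_vmeas M D)"
  using assms
proof (induction D)
  case (Cons x D)
  then obtain \<mu> h where x: "x = (\<mu>, h)" "sets \<mu> = sets borel" "set_integrable \<mu> {A..B} h" "vmeas_ok A B D"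
    by (cases x) auto
  have "integrable \<mu> (\<lambda>t. M *v (indicator {A..B} t *\<^sub>R h t))"
    using x(3) unfolding set_integrable_def by (rule integrable_bounded_linear[OF matrix_vector_mul_bounded_linear])
  then have "set_integrable \<mu> {A..B} (\<lambda>t. M *v h t)"
    unfolding set_integrable_def by (simp add: matrix_vector_mult_scaleR)
  with Cons.IH[OF x(4)] x show ?case by (simp add: mat_vmeas_def)
qed (simp add: mat_vmeas_def)

lemma vint_mat_vmeas:
  fixes D :: "('m::finite) vmeas"
  assumes "vmeas_ok A B D" and F: "bounded_borel F"
  shows "vint A B (mat_vmeas M D) F = M *v vint A B D F"
  using assms(1)
proof (induction D)
  case (Cons x D)
  then obtain \<mu> h where x: "x = (\<mu>, h)" "sets \<mu> = sets borel" "set_integrable \<mu> {A..B} h" "vmeas_ok A B D"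
    by (cases x) auto
  have "set_integrable \<mu> {A..B} (\<lambda>t. F t *\<^sub>R h t)"
    by (rule set_integrable_bounded_scaleR[OF x(2,3) F])
  then have "(LINT t:{A..B}|\<mu>. M *v (F t *\<^sub>R h t)) = M *v (LINT t:{A..B}|\<mu>. F t *\<^sub>R h t)"
    unfolding set_lebesgue_integral_def set_integrable_def matrix_vector_mult_scaleR[symmetric]
    by (rule integral_bounded_linear[OF matrix_vector_mul_bounded_linear])
  with Cons.IH[OF x(4)] show ?case
    by (simp add: x(1) mat_vmeas_def matrix_vector_mult_scaleR matrix_vector_right_distrib)
qed (simp add: mat_vmeas_def)

lemma quadratic_form_set_integral:
  fixes X :: "real^'m::finite^'m" and P Q :: "'m \<Rightarrow> real \<Rightarrow> real"
  assumes X: "\<And>i j. X $ i $ j = (LINT u:{0..C}|lborel. P i u * Q j u)"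
    and P: "\<And>i. bounded_borel (P i)" and Q: "\<And>j. bounded_borel (Q j)"
  shows "v \<bullet> (X *v v) = (LINT u:{0..C}|lborel. (\<Sum>i\<in>UNIV. v $ i * P i u) * (\<Sum>j\<in>UNIV. v $ j * Q j u))"
proof -
  have "v \<bullet> (X *v v) = (\<Sum>i\<in>UNIV. \<Sum>j\<in>UNIV. LINT u:{0..C}|lborel. v $ i * v $ j * (P i u * Q j u))"
    by (simp add: inner_vec_def matrix_vector_mult_def X sum_distrib_left mult_ac)
  also have "\<dots> = (LINT u:{0..C}|lborel. \<Sum>i\<in>UNIV. \<Sum>j\<in>UNIV. v $ i * v $ j * (P i u * Q j u))"
    by (simp add: set_integral_sum_bounded_borel bounded_borel_sum bounded_borel_cmult bounded_borel_mult P Q)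
  also have "\<dots> = (LINT u:{0..C}|lborel. (\<Sum>i\<in>UNIV. v $ i * P i u) * (\<Sum>j\<in>UNIV. v $ j * Q j u))"
    by (simp add: sum_product mult_ac)
  finally show ?thesis .
qed

lemma matrix_inv_mult_left:
  fixes C :: "real^'m::finite^'m"
  assumes "invertible C"
  shows "matrix_inv C ** C = mat 1"
proof -
  have "\<exists>C'. C ** C' = mat 1 \<and> C' ** C = mat 1" using assms unfolding invertible_def by blast
  from someI_ex[OF this] show ?thesis unfolding matrix_inv_def by blast
qed

section \<open>The integrated Brownian motion kernel\<close>

lemma has_real_derivative_split_at:
  fixes P Q P' Q' :: "real \<Rightarrow> real"
  assumes "\<And>x. (P has_real_derivative P' x) (at x)" and "\<And>x. (Q has_real_derivative Q' x) (at x)"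
    and "P c = Q c" and "P' c = Q' c"
  shows "((\<lambda>x. if x \<le> c then P x else Q x) has_real_derivative (if x \<le> c then P' x else Q' x)) (at x)"
proof -
  have "((\<lambda>x. if x \<in> {..c} then P x else Q x) has_vector_derivative (if x \<in> {..c} then P' x else Q' x))
      (at x within UNIV)"
  proof (rule has_vector_derivative_If_within_closures[where S="{..c}" and T="{c<..}"])
    show "(P has_vector_derivative P' x) (at x within {..c} \<union> closure {..c} \<inter> closure {c<..})"
      using assms(1)[of x]
      by (simp add: has_real_derivative_iff_has_vector_derivative[symmetric] has_field_derivative_at_within)
    show "(Q has_vector_derivative Q' x) (at x within {c<..} \<union> closure {..c} \<inter> closure {c<..})"
      using assms(2)[of x]
      by (simp add: has_real_derivative_iff_has_vector_derivative[symmetric] has_field_derivative_at_within)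
  qed (use assms(3,4) in auto)
  then show ?thesis by (simp add: has_real_derivative_iff_has_vector_derivative)
qed

lemma K_ibm_sym: "K_ibm a t s = K_ibm a s t"
  by (simp add: K_ibm_def max.commute min.commute)

lemma continuous_on_K_ibm: "continuous_on UNIV (K_ibm a t)"
  unfolding K_ibm_def by (intro continuous_intros) auto

lemma K_ibm_piecewise:
  "K_ibm a t = (\<lambda>s. if s \<le> t then t * (s\<^sup>2 - a\<^sup>2) / 2 - a\<^sup>2 * (s - a) / 2 - (s ^ 3 - a ^ 3) / 6
                    else s * (t\<^sup>2 - a\<^sup>2) / 2 - a\<^sup>2 * (t - a) / 2 - (t ^ 3 - a ^ 3) / 6)"
  by (auto simp: K_ibm_def fun_eq_iff max_def min_def)

definition K_01_form :: "real \<Rightarrow> real \<Rightarrow> real \<Rightarrow> real" where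
  "K_01_form a t s = (if s \<le> t then t * s - s\<^sup>2 / 2 - a\<^sup>2 / 2 else (t\<^sup>2 - a\<^sup>2) / 2)"

lemma K_01_form_eq_min: "K_01_form a t s = t * min t s - (min t s)\<^sup>2 / 2 - a\<^sup>2 / 2"
  by (auto simp: K_01_form_def min_def power2_eq_square field_simps)

lemma K_01_eq_form: "K_01 a t s = K_01_form a t s"
proof -
  have "(K_ibm a t has_real_derivative K_01_form a t s) (at s)"
    unfolding K_ibm_piecewise K_01_form_def
    by (rule has_real_derivative_split_at)
      (auto intro!: derivative_eq_intros simp: power2_eq_square power3_eq_cube algebra_simps divide_simps)
  then show ?thesis unfolding K_01_def by (rule DERIV_imp_deriv)
qed

lemma K_10_eq_K_01: "K_10 a t s = K_01 a s t"
  by (simp add: K_10_def K_01_def K_ibm_sym)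

lemma K_11_eq_min: "K_11 a t s = min t s"
proof -
  have "(\<lambda>u. K_01 a u s) = (\<lambda>u. if u \<le> s then (u\<^sup>2 - a\<^sup>2) / 2 else u * s - s\<^sup>2 / 2 - a\<^sup>2 / 2)"
    by (auto simp: fun_eq_iff K_01_eq_form K_01_form_def power2_eq_square field_simps)
  moreover have "((\<lambda>u. if u \<le> s then (u\<^sup>2 - a\<^sup>2) / 2 else u * s - s\<^sup>2 / 2 - a\<^sup>2 / 2)
      has_real_derivative (if t \<le> s then t else s)) (at t)"
    by (rule has_real_derivative_split_at)
      (auto intro!: derivative_eq_intros simp: power2_eq_square field_simps)
  ultimately show ?thesis unfolding K_11_def by (subst DERIV_imp_deriv) (auto simp: min_def)
qed

definition ibm_factor0 :: "real \<Rightarrow> real \<Rightarrow> real \<Rightarrow> real" where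
  "ibm_factor0 a t u = (if u < t then t - max u a else 0)"

definition ibm_factor1 :: "real \<Rightarrow> real \<Rightarrow> real" where
  "ibm_factor1 t u = (if u < t then 1 else 0)"

lemma has_integral_three_pieces:
  fixes I p P :: "real \<Rightarrow> real"
  assumes "0 \<le> a" "a \<le> m" "m \<le> B"
    and "\<And>u. u \<in> {0..a} \<Longrightarrow> I u = c"
    and "\<And>u. u \<in> {a..<m} \<Longrightarrow> I u = p u"
    and "\<And>u. u \<in> {m<..B} \<Longrightarrow> I u = 0"
    and "\<And>u. (P has_real_derivative p u) (at u)"
  shows "(I has_integral (c * a + (P m - P a))) {0..B}"
proof -
  have "((\<lambda>_. c) has_integral c * a) {0..a}"
    using has_integral_const_real[of c 0 a] assms(1) by (simp add: mult.commute)
  then have I1: "(I has_integral c * a) {0..a}"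
    by (rule has_integral_spike_finite[where S="{}", rotated 2]) (use assms(4) in auto)
  have "(p has_integral (P m - P a)) {a..m}"
    by (rule fundamental_theorem_of_calculus[OF assms(2)])
      (use assms(7) in \<open>auto simp: has_real_derivative_iff_has_vector_derivative[symmetric]
        intro: has_field_derivative_at_within\<close>)
  then have I2: "(I has_integral (P m - P a)) {a..m}"
    by (rule has_integral_spike_finite[where S="{m}", rotated 2]) (use assms(5) in auto)
  have I3: "(I has_integral 0) {m..B}"
    by (rule has_integral_spike_finite[where S="{m}" and f="\<lambda>_. 0", OF _ _ has_integral_0])
      (use assms(6) in auto)
  from has_integral_combine[OF assms(1,2) I1 I2] have "(I has_integral (c * a + (P m - P a))) {0..m}" .
  from has_integral_combine[OF _ assms(3) this I3] assms(1,2) show ?thesis by simp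
qed

lemma abs_ibm_factor0_le: "0 \<le> a \<Longrightarrow> a \<le> t \<Longrightarrow> \<bar>ibm_factor0 a t u\<bar> \<le> t"
  by (auto simp: ibm_factor0_def)

lemma abs_ibm_factor1_le: "\<bar>ibm_factor1 t u\<bar> \<le> 1"
  by (simp add: ibm_factor1_def)

lemma K_ibm_factorization_le:
  assumes "0 \<le> a" "a < s" "s \<le> t" "t \<le> B"
  shows "(LINT u:{0..B}|lborel. ibm_factor0 a t u * ibm_factor0 a s u) = K_ibm a t s"
proof (rule set_integral_eq_has_integral_bounded[where M="t * s"])
  show "(\<lambda>u. ibm_factor0 a t u * ibm_factor0 a s u) \<in> borel_measurable borel"
    unfolding ibm_factor0_def by measurable
  show "\<bar>ibm_factor0 a t u * ibm_factor0 a s u\<bar> \<le> t * s" for u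
    unfolding abs_mult using assms by (intro mult_mono abs_ibm_factor0_le) auto
  have "((\<lambda>u. ibm_factor0 a t u * ibm_factor0 a s u) has_integral
     ((t - a) * (s - a) * a + ((t * s * s - (t + s) * s^2/2 + s^3/3) - (t * s * a - (t + s) * a^2/2 + a^3/3)))) {0..B}"
    by (rule has_integral_three_pieces[where p="\<lambda>u. (t - u) * (s - u)" and P="\<lambda>u. t * s * u - (t + s) * u^2/2 + u^3/3"])
       (use assms in \<open>auto simp: ibm_factor0_def max_def intro!: derivative_eq_intros
         simp: algebra_simps power2_eq_square power3_eq_cube\<close>)
  moreover have "(t - a) * (s - a) * a + ((t * s * s - (t + s) * s^2/2 + s^3/3) - (t * s * a - (t + s) * a^2/2 + a^3/3))
      = K_ibm a t s"
    using assms by (simp add: K_ibm_def max_def min_def power2_eq_square power3_eq_cube field_simps)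
  ultimately show "((\<lambda>u. ibm_factor0 a t u * ibm_factor0 a s u) has_integral K_ibm a t s) {0..B}" by simp
qed

lemma K_ibm_factorization:
  assumes "0 \<le> a" "t \<in> {a<..B}" "s \<in> {a<..B}"
  shows "(LINT u:{0..B}|lborel. ibm_factor0 a t u * ibm_factor0 a s u) = K_ibm a t s"
proof (cases "s \<le> t")
  case False
  then show ?thesis using K_ibm_factorization_le[of a t s B] assms by (simp add: K_ibm_sym mult.commute)
qed (use K_ibm_factorization_le assms in auto)

lemma K_01_factorization:
  assumes "0 \<le> a" "t \<in> {a<..B}" "s \<in> {a<..B}"
  shows "(LINT u:{0..B}|lborel. ibm_factor0 a t u * ibm_factor1 s u) = K_01 a t s"
proof (rule set_integral_eq_has_integral_bounded[where M=t])
  show "(\<lambda>u. ibm_factor0 a t u * ibm_factor1 s u) \<in> borel_measurable borel"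
    unfolding ibm_factor0_def ibm_factor1_def by measurable
  show "\<bar>ibm_factor0 a t u * ibm_factor1 s u\<bar> \<le> t" for u
    using mult_mono[OF abs_ibm_factor0_le abs_ibm_factor1_le] assms by (simp add: abs_mult)
  have "((\<lambda>u. ibm_factor0 a t u * ibm_factor1 s u) has_integral
     ((t - a) * a + ((t * min t s - (min t s)^2/2) - (t * a - a^2/2)))) {0..B}"
    by (rule has_integral_three_pieces[where p="\<lambda>u. t - u" and P="\<lambda>u. t * u - u^2/2"])
       (use assms in \<open>auto simp: ibm_factor0_def ibm_factor1_def max_def min_def
         intro!: derivative_eq_intros simp: algebra_simps power2_eq_square split: if_split_asm\<close>)
  moreover have "(t - a) * a + ((t * min t s - (min t s)^2/2) - (t * a - a^2/2)) = K_01 a t s"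
    by (simp add: K_01_eq_form K_01_form_def min_def power2_eq_square field_simps)
  ultimately show "((\<lambda>u. ibm_factor0 a t u * ibm_factor1 s u) has_integral K_01 a t s) {0..B}"
    by simp
qed

lemma K_11_factorization:
  assumes "0 \<le> a" "t \<in> {a<..B}" "s \<in> {a<..B}"
  shows "(LINT u:{0..B}|lborel. ibm_factor1 t u * ibm_factor1 s u) = K_11 a t s"
proof (rule set_integral_eq_has_integral_bounded[where M=1])
  show "(\<lambda>u. ibm_factor1 t u * ibm_factor1 s u) \<in> borel_measurable borel"
    unfolding ibm_factor1_def by measurable
  show "\<bar>ibm_factor1 t u * ibm_factor1 s u\<bar> \<le> 1" for u by (simp add: ibm_factor1_def)
  have "((\<lambda>u. ibm_factor1 t u * ibm_factor1 s u) has_integral (1 * a + (min t s - a))) {0..B}"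
    by (rule has_integral_three_pieces[where p="\<lambda>u. 1" and P="\<lambda>u. u"])
       (use assms in \<open>auto simp: ibm_factor1_def intro!: derivative_eq_intros\<close>)
  then show "((\<lambda>u. ibm_factor1 t u * ibm_factor1 s u) has_integral K_11 a t s) {0..B}"
    by (simp add: K_11_eq_min)
qed

section \<open>The measures zeta reproduce f and its derivative\<close>

lemma has_integral_fourth_derivative_by_parts:
  fixes fd :: "nat \<Rightarrow> real \<Rightarrow> 'a::banach" and p p1 p2 p3 :: "real \<Rightarrow> real"
  assumes "A \<le> \<alpha>" "\<alpha> \<le> \<beta>" "\<beta> \<le> B"
    and fd: "\<forall>k<4. \<forall>t\<in>{A..B}. (fd k has_vector_derivative fd (Suc k) t) (at t within {A..B})"
    and "\<And>s. (p has_real_derivative p1 s) (at s)" "\<And>s. (p1 has_real_derivative p2 s) (at s)"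
    and "\<And>s. (p2 has_real_derivative p3 s) (at s)" "\<And>s. (p3 has_real_derivative 0) (at s)"
  shows "((\<lambda>s. p s *\<^sub>R fd 4 s) has_integral
     ((p \<beta> *\<^sub>R fd 3 \<beta> - p1 \<beta> *\<^sub>R fd 2 \<beta> + p2 \<beta> *\<^sub>R fd 1 \<beta> - p3 \<beta> *\<^sub>R fd 0 \<beta>)
    - (p \<alpha> *\<^sub>R fd 3 \<alpha> - p1 \<alpha> *\<^sub>R fd 2 \<alpha> + p2 \<alpha> *\<^sub>R fd 1 \<alpha> - p3 \<alpha> *\<^sub>R fd 0 \<alpha>))) {\<alpha>..\<beta>}"
proof (rule fundamental_theorem_of_calculus[OF assms(2)])
  fix x assume x: "x \<in> {\<alpha>..\<beta>}"
  have fdx: "(fd k has_vector_derivative fd (Suc k) x) (at x within {\<alpha>..\<beta>})" if "k < 4" for k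
    using fd that x assms(1,3) by (meson atLeastAtMost_iff has_vector_derivative_within_subset
        order_trans subsetI)
  have px: "(q has_real_derivative q' x) (at x within {\<alpha>..\<beta>})"
    if "\<And>s. (q has_real_derivative q' s) (at s)" for q q'
    using that by (rule has_field_derivative_at_within)
  have "((\<lambda>s. p s *\<^sub>R fd 3 s - p1 s *\<^sub>R fd 2 s + p2 s *\<^sub>R fd 1 s - p3 s *\<^sub>R fd 0 s) has_vector_derivative
      (p x *\<^sub>R fd 4 x + p1 x *\<^sub>R fd 3 x) - (p1 x *\<^sub>R fd 3 x + p2 x *\<^sub>R fd 2 x)
      + (p2 x *\<^sub>R fd 2 x + p3 x *\<^sub>R fd 1 x) - (p3 x *\<^sub>R fd 1 x + 0 *\<^sub>R fd 0 x)) (at x within {\<alpha>..\<beta>})"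
    using has_vector_derivative_scaleR[OF px[OF assms(5)] fdx[of 3]]
      has_vector_derivative_scaleR[OF px[OF assms(6)] fdx[of 2]]
      has_vector_derivative_scaleR[OF px[OF assms(7)] fdx[of 1]]
      has_vector_derivative_scaleR[OF px[OF assms(8)] fdx[of 0]]
    by (intro has_vector_derivative_diff has_vector_derivative_add) (simp_all add: numeral_eq_Suc)
  then show "((\<lambda>s. p s *\<^sub>R fd 3 s - p1 s *\<^sub>R fd 2 s + p2 s *\<^sub>R fd 1 s - p3 s *\<^sub>R fd 0 s) has_vector_derivative
      p x *\<^sub>R fd 4 x) (at x within {\<alpha>..\<beta>})"
    by (simp add: algebra_simps)
qed

lemma set_integral_return:
  fixes f :: "real \<Rightarrow> 'b::{banach, second_countable_topology}"
  assumes "f \<in> borel_measurable borel" "S \<in> sets borel"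
  shows "(LINT t:S|return borel x. f t) = (if x \<in> S then f x else 0)"
  unfolding set_lebesgue_integral_def using assms
  by (subst integral_return) (auto intro!: borel_measurable_scaleR)

lemma set_integrable_return_const:
  fixes c :: "'b::{banach, second_countable_topology}"
  assumes "S \<in> sets borel"
  shows "set_integrable (return borel x) S (\<lambda>_. c)"
proof -
  interpret prob_space "return borel x" by (rule prob_space_return) simp
  show ?thesis unfolding set_integrable_def
    by (rule integrable_const_bound[where B="norm c"]) (use assms in \<open>auto simp: indicator_def\<close>)
qed

lemma vmeas_ok_zeta0:
  fixes fd :: "nat \<Rightarrow> real \<Rightarrow> real^'m::finite"
  assumes "set_integrable lborel {A..B} (fd 4)"
  shows "vmeas_ok A B (zeta0 a A B fd)"
  using assms by (simp add: zeta0_def set_integrable_return_const)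

lemma vmeas_ok_zeta1: "vmeas_ok A B (zeta1 a A B fd)"
  by (simp add: zeta1_def set_integrable_return_const)

lemma vint_zeta0:
  fixes fd :: "nat \<Rightarrow> real \<Rightarrow> real^'m::finite"
  assumes "A \<le> B" "g \<in> borel_measurable borel"
  shows "vint A B (zeta0 a A B fd) g =
    g A *\<^sub>R (fd 3 A - (6 * (A + a) / ((A + 3 * a) * (A - a)\<^sup>2)) *\<^sub>R fd 1 A
                           + (12 * A / ((A + 3 * a) * (A - a)^3)) *\<^sub>R fd 0 A)
    + (g B *\<^sub>R (- fd 3 B) + (LINT t:{A..B}|lborel. g t *\<^sub>R fd 4 t))"
  using assms by (simp add: vint_def zeta0_def set_integral_return borel_measurable_scaleR)

lemma vint_zeta1:
  fixes fd :: "nat \<Rightarrow> real \<Rightarrow> real^'m::finite"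
  assumes "A \<le> B" "g \<in> borel_measurable borel"
  shows "vint A B (zeta1 a A B fd) g =
    g A *\<^sub>R (- fd 2 A + (4 * (A + 2 * a) / ((A + 3 * a) * (A - a))) *\<^sub>R fd 1 A
                           - (6 * (A + a) / ((A + 3 * a) * (A - a)\<^sup>2)) *\<^sub>R fd 0 A)
    + g B *\<^sub>R fd 2 B"
  using assms by (simp add: vint_def zeta1_def set_integral_return borel_measurable_scaleR)

lemma set_integral_eq_has_integral_continuous_scaleR:
  fixes f :: "real \<Rightarrow> 'b::euclidean_space" and g :: "real \<Rightarrow> real"
  assumes f: "set_integrable lborel {A..B} f" and g: "continuous_on UNIV g"
    and "((\<lambda>s. g s *\<^sub>R f s) has_integral V) {A..B}"
  shows "(LINT t:{A..B}|lborel. g t *\<^sub>R f t) = V"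
proof -
  have "compact (g ` {A..B})" by (rule compact_continuous_image[OF continuous_on_subset[OF g] compact_Icc]) simp
  then obtain C where "\<And>s. s \<in> {A..B} \<Longrightarrow> \<bar>g s\<bar> \<le> C"
    using compact_imp_bounded bounded_iff by (metis image_eqI real_norm_def)
  then have "set_integrable lborel {A..B} (\<lambda>t. g t *\<^sub>R f t)"
    using borel_measurable_continuous_onI[OF g] by (intro set_integrable_scaleR_bounded_on[OF _ f]) auto
  from set_borel_integral_eq_integral(2)[OF this] assms(3) show ?thesis by (simp add: integral_unique)
qed

lemma zeta_boundary_coefficients:
  fixes a A t :: real
  assumes "0 \<le> a" "a < A"
  shows "- (6 * (A + a) / ((A + 3 * a) * (A - a)\<^sup>2)) * (t * (A\<^sup>2 - a\<^sup>2) / 2 - a\<^sup>2 * (A - a) / 2 - (A ^ 3 - a ^ 3) / 6)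
      + 4 * (A + 2 * a) / ((A + 3 * a) * (A - a)) * (t * A - A\<^sup>2 / 2 - a\<^sup>2 / 2) = t - A" (is ?c1)
    and "12 * A / ((A + 3 * a) * (A - a) ^ 3) * (t * (A\<^sup>2 - a\<^sup>2) / 2 - a\<^sup>2 * (A - a) / 2 - (A ^ 3 - a ^ 3) / 6)
      - 6 * (A + a) / ((A + 3 * a) * (A - a)\<^sup>2) * (t * A - A\<^sup>2 / 2 - a\<^sup>2 / 2) = 1" (is ?c0)
    and "- (6 * (A + a) / ((A + 3 * a) * (A - a)\<^sup>2)) * ((A\<^sup>2 - a\<^sup>2) / 2)
      + 4 * (A + 2 * a) / ((A + 3 * a) * (A - a)) * A = 1" (is ?d1)
    and "12 * A / ((A + 3 * a) * (A - a) ^ 3) * ((A\<^sup>2 - a\<^sup>2) / 2)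
      - 6 * (A + a) / ((A + 3 * a) * (A - a)\<^sup>2) * A = 0" (is ?d0)
proof -
  obtain e d where e: "e = A + 3 * a" "e \<noteq> 0" and d: "d = A - a" "d \<noteq> 0" using assms by auto
  have "- (6 * (A + a) / (e * d\<^sup>2)) * (t * (A\<^sup>2 - a\<^sup>2) / 2 - a\<^sup>2 * (A - a) / 2 - (A ^ 3 - a ^ 3) / 6)
      + 4 * (A + 2 * a) / (e * d) * (t * A - A\<^sup>2 / 2 - a\<^sup>2 / 2) = t - A"
    using e(2) d(2) by (simp add: field_simps) (simp add: e(1) d(1); algebra)
  then show ?c1 unfolding e(1) d(1) .
  have "12 * A / (e * d ^ 3) * (t * (A\<^sup>2 - a\<^sup>2) / 2 - a\<^sup>2 * (A - a) / 2 - (A ^ 3 - a ^ 3) / 6)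
      - 6 * (A + a) / (e * d\<^sup>2) * (t * A - A\<^sup>2 / 2 - a\<^sup>2 / 2) = 1"
    using e(2) d(2) by (simp add: field_simps) (simp add: e(1) d(1); algebra)
  then show ?c0 unfolding e(1) d(1) .
  have "- (6 * (A + a) / (e * d\<^sup>2)) * ((A\<^sup>2 - a\<^sup>2) / 2) + 4 * (A + 2 * a) / (e * d) * A = 1"
    using e(2) d(2) by (simp add: field_simps) (simp add: e(1) d(1); algebra)
  then show ?d1 unfolding e(1) d(1) .
  have "12 * A / (e * d ^ 3) * ((A\<^sup>2 - a\<^sup>2) / 2) - 6 * (A + a) / (e * d\<^sup>2) * A = 0"
    using e(2) d(2) by (simp add: field_simps) (simp add: e(1) d(1); algebra)
  then show ?d0 unfolding e(1) d(1) .
qed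

locale ibm_regression =
  fixes a A B :: real and fd :: "nat \<Rightarrow> real \<Rightarrow> real^'m::finite"
  assumes a_nonneg: "0 \<le> a" and a_less_A: "a < A" and A_less_B: "A < B"
    and fd_deriv: "\<forall>k<4. \<forall>t\<in>{A..B}. (fd k has_vector_derivative fd (Suc k) t) (at t within {A..B})"
    and fd4_integrable: "set_integrable lborel {A..B} (fd 4)"
begin

abbreviation "\<zeta>0 \<equiv> zeta0 a A B fd"
abbreviation "\<zeta>1 \<equiv> zeta1 a A B fd"

lemma vmeas_ok_\<zeta>: "vmeas_ok A B \<zeta>0" "vmeas_ok A B \<zeta>1"
  using vmeas_ok_zeta0[where fd=fd, OF fd4_integrable] vmeas_ok_zeta1 by blast+

text \<open>Both kernels are cubic in s on either side of t, so four integrations by parts on [A, t]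
  and [t, B] leave only boundary terms; the jump of their third derivative at t produces f(t).\<close>

lemma K_ibm_fd4_by_parts:
  assumes t: "t \<in> {A..B}"
  shows "(LINT s:{A..B}|lborel. K_ibm a t s *\<^sub>R fd 4 s)
       = K_ibm a t B *\<^sub>R fd 3 B - K_01 a t B *\<^sub>R fd 2 B
         - (K_ibm a t A *\<^sub>R fd 3 A - K_01 a t A *\<^sub>R fd 2 A + (t - A) *\<^sub>R fd 1 A + fd 0 A) + fd 0 t"
proof -
  define P where "P s = t * (s\<^sup>2 - a\<^sup>2) / 2 - a\<^sup>2 * (s - a) / 2 - (s ^ 3 - a ^ 3) / 6" for s
  define P1 where "P1 s = t * s - a\<^sup>2 / 2 - s\<^sup>2 / 2" for s
  define Q where "Q s = s * (t\<^sup>2 - a\<^sup>2) / 2 - a\<^sup>2 * (t - a) / 2 - (t ^ 3 - a ^ 3) / 6" for s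
  define GP where "GP x = P x *\<^sub>R fd 3 x - P1 x *\<^sub>R fd 2 x + (t - x) *\<^sub>R fd 1 x - (- 1) *\<^sub>R fd 0 x" for x
  define GQ where "GQ x = Q x *\<^sub>R fd 3 x - ((t\<^sup>2 - a\<^sup>2) / 2) *\<^sub>R fd 2 x + 0 *\<^sub>R fd 1 x - 0 *\<^sub>R fd 0 x" for x
  have tA: "A \<le> t" "t \<le> B" using t by auto
  have "((\<lambda>s. P s *\<^sub>R fd 4 s) has_integral (GP t - GP A)) {A..t}"
    unfolding GP_def
    by (rule has_integral_fourth_derivative_by_parts[OF order.refl tA fd_deriv])
      (auto simp: P_def P1_def intro!: derivative_eq_intros simp: algebra_simps power2_eq_square power3_eq_cube)
  then have h1: "((\<lambda>s. K_ibm a t s *\<^sub>R fd 4 s) has_integral (GP t - GP A)) {A..t}"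
    by (rule has_integral_eq[rotated]) (auto simp: P_def K_ibm_def max_def min_def)
  have "((\<lambda>s. Q s *\<^sub>R fd 4 s) has_integral (GQ B - GQ t)) {t..B}"
    unfolding GQ_def
    by (rule has_integral_fourth_derivative_by_parts[OF tA order.refl fd_deriv])
      (auto simp: Q_def intro!: derivative_eq_intros simp: field_simps power2_eq_square)
  then have h2: "((\<lambda>s. K_ibm a t s *\<^sub>R fd 4 s) has_integral (GQ B - GQ t)) {t..B}"
    by (rule has_integral_eq[rotated])
      (auto simp: Q_def K_ibm_def max_def min_def power2_eq_square power3_eq_cube field_simps)
  have "(LINT s:{A..B}|lborel. K_ibm a t s *\<^sub>R fd 4 s) = (GP t - GP A) + (GQ B - GQ t)"
    using fd4_integrable _ has_integral_combine[OF tA h1 h2]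
    by (rule set_integral_eq_has_integral_continuous_scaleR) (rule continuous_on_K_ibm)
  moreover have "P A = K_ibm a t A" "P1 A = K_01 a t A" "Q B = K_ibm a t B" "(t\<^sup>2 - a\<^sup>2) / 2 = K_01 a t B"
    "P t = Q t" "P1 t = (t\<^sup>2 - a\<^sup>2) / 2"
    using tA unfolding P_def P1_def Q_def
    by (auto simp: K_ibm_def K_01_eq_form K_01_form_def max_def min_def field_simps power2_eq_square
        power3_eq_cube)
  ultimately show ?thesis by (simp add: GP_def GQ_def algebra_simps)
qed

lemma K_10_fd4_by_parts:
  assumes t: "t \<in> {A..B}"
  shows "(LINT s:{A..B}|lborel. K_10 a t s *\<^sub>R fd 4 s)
       = K_10 a t B *\<^sub>R fd 3 B - K_11 a t B *\<^sub>R fd 2 B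
         - (K_10 a t A *\<^sub>R fd 3 A - K_11 a t A *\<^sub>R fd 2 A + fd 1 A) + fd 1 t"
proof -
  define P where "P s = (s\<^sup>2 - a\<^sup>2) / 2" for s
  define Q where "Q s = s * t - t\<^sup>2 / 2 - a\<^sup>2 / 2" for s
  define GP where "GP x = P x *\<^sub>R fd 3 x - x *\<^sub>R fd 2 x + 1 *\<^sub>R fd 1 x - 0 *\<^sub>R fd 0 x" for x
  define GQ where "GQ x = Q x *\<^sub>R fd 3 x - t *\<^sub>R fd 2 x + 0 *\<^sub>R fd 1 x - 0 *\<^sub>R fd 0 x" for x
  have tA: "A \<le> t" "t \<le> B" using t by auto
  have K10: "K_10 a t = (\<lambda>s. K_01_form a s t)"
    by (simp add: fun_eq_iff K_10_eq_K_01 K_01_eq_form)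
  have "((\<lambda>s. P s *\<^sub>R fd 4 s) has_integral (GP t - GP A)) {A..t}"
    unfolding GP_def
    by (rule has_integral_fourth_derivative_by_parts[OF order.refl tA fd_deriv])
      (auto simp: P_def intro!: derivative_eq_intros simp: algebra_simps power2_eq_square)
  then have h1: "((\<lambda>s. K_10 a t s *\<^sub>R fd 4 s) has_integral (GP t - GP A)) {A..t}"
    by (rule has_integral_eq[rotated]) (auto simp: K10 P_def K_01_form_def power2_eq_square field_simps)
  have "((\<lambda>s. Q s *\<^sub>R fd 4 s) has_integral (GQ B - GQ t)) {t..B}"
    unfolding GQ_def
    by (rule has_integral_fourth_derivative_by_parts[OF tA order.refl fd_deriv])
      (auto simp: Q_def intro!: derivative_eq_intros simp: field_simps power2_eq_square)
  then have h2: "((\<lambda>s. K_10 a t s *\<^sub>R fd 4 s) has_integral (GQ B - GQ t)) {t..B}"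
    by (rule has_integral_eq[rotated]) (auto simp: K10 Q_def K_01_form_def power2_eq_square field_simps)
  have "(LINT s:{A..B}|lborel. K_10 a t s *\<^sub>R fd 4 s) = (GP t - GP A) + (GQ B - GQ t)"
    using fd4_integrable _ has_integral_combine[OF tA h1 h2]
    by (rule set_integral_eq_has_integral_continuous_scaleR)
      (simp add: K10 K_01_form_eq_min continuous_intros)
  moreover have "P A = K_10 a t A" "Q B = K_10 a t B" "A = K_11 a t A" "t = K_11 a t B" "P t = Q t"
    using tA unfolding P_def Q_def K10
    by (auto simp: K_11_eq_min K_01_form_def field_simps power2_eq_square)
  ultimately show ?thesis by (simp add: GP_def GQ_def algebra_simps)
qed

lemma zeta_reproduces_f:
  assumes t: "t \<in> {A..B}"
  shows "vint A B \<zeta>0 (K_ibm a t) + vint A B \<zeta>1 (K_01 a t) = fd 0 t"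
proof -
  define \<alpha> where "\<alpha> = 6 * (A + a) / ((A + 3 * a) * (A - a)\<^sup>2)"
  define \<beta> where "\<beta> = 12 * A / ((A + 3 * a) * (A - a)^3)"
  define \<gamma> where "\<gamma> = 4 * (A + 2 * a) / ((A + 3 * a) * (A - a))"
  have m: "K_ibm a t \<in> borel_measurable borel" "K_01 a t \<in> borel_measurable borel"
    using continuous_on_K_ibm
    by (auto intro!: borel_measurable_continuous_onI continuous_intros simp: K_01_eq_form[abs_def] K_01_form_eq_min)
  have "K_ibm a t A = t * (A\<^sup>2 - a\<^sup>2) / 2 - a\<^sup>2 * (A - a) / 2 - (A ^ 3 - a ^ 3) / 6"
    "K_01 a t A = t * A - A\<^sup>2 / 2 - a\<^sup>2 / 2"
    using t by (auto simp: K_ibm_def K_01_eq_form K_01_form_def max_def min_def)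
  then have "- \<alpha> * K_ibm a t A + \<gamma> * K_01 a t A = t - A" "\<beta> * K_ibm a t A - \<alpha> * K_01 a t A = 1"
    unfolding \<alpha>_def \<beta>_def \<gamma>_def by (simp_all only: zeta_boundary_coefficients(1,2)[OF a_nonneg a_less_A])
  then show ?thesis
    unfolding vint_zeta0[OF less_imp_le[OF A_less_B] m(1)] vint_zeta1[OF less_imp_le[OF A_less_B] m(2)]
      K_ibm_fd4_by_parts[OF t] \<alpha>_def[symmetric] \<beta>_def[symmetric] \<gamma>_def[symmetric] vec_eq_iff
    by (simp only: vector_add_component vector_minus_component vector_scaleR_component
        vector_uminus_component real_scaleR_def) (intro allI; algebra)
qed

lemma zeta_reproduces_f':
  assumes t: "t \<in> {A..B}"
  shows "vint A B \<zeta>0 (K_10 a t) + vint A B \<zeta>1 (K_11 a t) = fd 1 t"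
proof -
  define \<alpha> where "\<alpha> = 6 * (A + a) / ((A + 3 * a) * (A - a)\<^sup>2)"
  define \<beta> where "\<beta> = 12 * A / ((A + 3 * a) * (A - a)^3)"
  define \<gamma> where "\<gamma> = 4 * (A + 2 * a) / ((A + 3 * a) * (A - a))"
  have m: "K_10 a t \<in> borel_measurable borel" "K_11 a t \<in> borel_measurable borel"
    by (auto intro!: borel_measurable_continuous_onI continuous_intros
        simp: K_10_eq_K_01[abs_def] K_01_eq_form K_01_form_eq_min K_11_eq_min[abs_def])
  have "K_10 a t A = (A\<^sup>2 - a\<^sup>2) / 2" "K_11 a t A = A"
    using t by (auto simp: K_10_eq_K_01 K_01_eq_form K_01_form_def K_11_eq_min power2_eq_square)
  then have "- \<alpha> * K_10 a t A + \<gamma> * K_11 a t A = 1" "\<beta> * K_10 a t A - \<alpha> * K_11 a t A = 0"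
    unfolding \<alpha>_def \<beta>_def \<gamma>_def by (simp_all only: zeta_boundary_coefficients(3,4)[OF a_nonneg a_less_A])
  then show ?thesis
    unfolding vint_zeta0[OF less_imp_le[OF A_less_B] m(1)] vint_zeta1[OF less_imp_le[OF A_less_B] m(2)]
      K_10_fd4_by_parts[OF t] \<alpha>_def[symmetric] \<beta>_def[symmetric] \<gamma>_def[symmetric] vec_eq_iff
    by (simp only: vector_add_component vector_minus_component vector_scaleR_component
        vector_uminus_component real_scaleR_def) (intro allI; algebra)
qed

end

section \<open>Feature representation and the Gauss-Markov argument\<close>

text \<open>Clamping t to [A, B] makes the kernels globally bounded without changing them on [A, B].\<close>

definition ibm_kernel0 :: "real \<Rightarrow> real \<Rightarrow> real \<Rightarrow> real \<Rightarrow> real \<Rightarrow> real" where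
  "ibm_kernel0 a A B t = ibm_factor0 a (max A (min B t))"

definition ibm_kernel1 :: "real \<Rightarrow> real \<Rightarrow> real \<Rightarrow> real \<Rightarrow> real" where
  "ibm_kernel1 A B t = ibm_factor1 (max A (min B t))"

definition ibm_feature :: "real \<Rightarrow> real \<Rightarrow> real \<Rightarrow> ('m::finite) vmeas \<Rightarrow> 'm vmeas \<Rightarrow> real \<Rightarrow> real^'m" where
  "ibm_feature a A B H0 H1 u =
     vint A B H0 (\<lambda>t. ibm_kernel0 a A B t u) + vint A B H1 (\<lambda>t. ibm_kernel1 A B t u)"

definition info_matrix :: "real \<Rightarrow> real \<Rightarrow> real \<Rightarrow> (nat \<Rightarrow> real \<Rightarrow> real^'m) \<Rightarrow> real^'m^'m::finite" where
  "info_matrix a A B fd = vouter A B (fd 0) (zeta0 a A B fd) + vouter A B (fd 1) (zeta1 a A B fd)"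

lemma ibm_kernel_eq_factor:
  "t \<in> {A..B} \<Longrightarrow> ibm_kernel0 a A B t = ibm_factor0 a t"
  "t \<in> {A..B} \<Longrightarrow> ibm_kernel1 A B t = ibm_factor1 t"
  by (simp_all add: ibm_kernel0_def ibm_kernel1_def)

lemma bounded_kernel_ibm_kernel0:
  assumes "0 \<le> a" "a \<le> A" "A \<le> B"
  shows "bounded_kernel (ibm_kernel0 a A B)"
  unfolding bounded_kernel_def
proof
  show "(\<lambda>(t, u). ibm_kernel0 a A B t u) \<in> borel_measurable (borel \<Otimes>\<^sub>M borel)"
    unfolding ibm_kernel0_def ibm_factor0_def case_prod_beta' by measurable
  show "\<exists>M. \<forall>t u. \<bar>ibm_kernel0 a A B t u\<bar> \<le> M"
    using assms by (intro exI[of _ B] allI) (auto simp: ibm_kernel0_def ibm_factor0_def)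
qed

lemma bounded_kernel_ibm_kernel1: "bounded_kernel (ibm_kernel1 A B)"
  unfolding bounded_kernel_def
proof
  show "(\<lambda>(t, u). ibm_kernel1 A B t u) \<in> borel_measurable (borel \<Otimes>\<^sub>M borel)"
    unfolding ibm_kernel1_def ibm_factor1_def case_prod_beta' by measurable
qed (auto simp: ibm_kernel1_def ibm_factor1_def intro: exI[of _ 1])

context ibm_regression
begin

abbreviation "\<kappa>0 \<equiv> ibm_kernel0 a A B"
abbreviation "\<kappa>1 \<equiv> ibm_kernel1 A B"
abbreviation "feature \<equiv> ibm_feature a A B"

lemma bounded_kernel_\<kappa>: "bounded_kernel \<kappa>0" "bounded_kernel \<kappa>1"
  using bounded_kernel_ibm_kernel0 a_nonneg a_less_A A_less_B bounded_kernel_ibm_kernel1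
  by (auto simp: less_imp_le)

lemma kernel_factorizations:
  assumes "t \<in> {A..B}" "s \<in> {A..B}"
  shows "K_ibm a t s = (LINT u:{0..B}|lborel. \<kappa>0 t u * \<kappa>0 s u)"
    and "K_01 a t s = (LINT u:{0..B}|lborel. \<kappa>0 t u * \<kappa>1 s u)"
    and "K_10 a t s = (LINT u:{0..B}|lborel. \<kappa>1 t u * \<kappa>0 s u)"
    and "K_11 a t s = (LINT u:{0..B}|lborel. \<kappa>1 t u * \<kappa>1 s u)"
proof -
  have ts: "t \<in> {a<..B}" "s \<in> {a<..B}" using assms a_less_A by auto
  show "K_ibm a t s = (LINT u:{0..B}|lborel. \<kappa>0 t u * \<kappa>0 s u)"
    using K_ibm_factorization[OF a_nonneg ts] assms by (simp add: ibm_kernel_eq_factor)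
  show "K_01 a t s = (LINT u:{0..B}|lborel. \<kappa>0 t u * \<kappa>1 s u)"
    using K_01_factorization[OF a_nonneg ts] assms by (simp add: ibm_kernel_eq_factor)
  show "K_10 a t s = (LINT u:{0..B}|lborel. \<kappa>1 t u * \<kappa>0 s u)"
    using K_01_factorization[OF a_nonneg ts(2,1)] assms
    by (simp add: ibm_kernel_eq_factor K_10_eq_K_01 mult.commute)
  show "K_11 a t s = (LINT u:{0..B}|lborel. \<kappa>1 t u * \<kappa>1 s u)"
    using K_11_factorization[OF a_nonneg ts] assms by (simp add: ibm_kernel_eq_factor)
qed

lemma bounded_borel_feature:
  assumes "vmeas_ok A B H0" "vmeas_ok A B H1"
  shows "bounded_borel (\<lambda>u. feature H0 H1 u $ i)"
  unfolding ibm_feature_def vector_add_component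
  by (intro bounded_borel_add bounded_borel_vint_kernel assms bounded_kernel_\<kappa>)

lemma est_cov_eq_inner_feature:
  assumes H0: "vmeas_ok A B H0" and H1: "vmeas_ok A B H1"
  shows "est_cov a A B H0 H1 $ i $ j = (LINT u:{0..B}|lborel. feature H0 H1 u $ i * feature H0 H1 u $ j)"
proof -
  define p0 where "p0 i u = vint A B H0 (\<lambda>t. \<kappa>0 t u) $ i" for i u
  define p1 where "p1 i u = vint A B H1 (\<lambda>t. \<kappa>1 t u) $ i" for i u
  have b: "bounded_borel (p0 i)" "bounded_borel (p1 i)" for i
    unfolding p0_def p1_def using assms bounded_kernel_\<kappa> by (auto intro: bounded_borel_vint_kernel)
  have "est_cov a A B H0 H1 $ i $ j
      = (LINT u:{0..B}|lborel. p0 i u * p0 j u) + (LINT u:{0..B}|lborel. p0 i u * p1 j u)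
      + (LINT u:{0..B}|lborel. p1 i u * p0 j u) + (LINT u:{0..B}|lborel. p1 i u * p1 j u)"
    unfolding est_cov_def p0_def p1_def
    using ccov_factorized_kernel[OF H0 H0 bounded_kernel_\<kappa>(1) bounded_kernel_\<kappa>(1) kernel_factorizations(1)]
      ccov_factorized_kernel[OF H0 H1 bounded_kernel_\<kappa>(1) bounded_kernel_\<kappa>(2) kernel_factorizations(2)]
      ccov_factorized_kernel[OF H1 H0 bounded_kernel_\<kappa>(2) bounded_kernel_\<kappa>(1) kernel_factorizations(3)]
      ccov_factorized_kernel[OF H1 H1 bounded_kernel_\<kappa>(2) bounded_kernel_\<kappa>(2) kernel_factorizations(4)]
    by simp
  also have "\<dots> = (LINT u:{0..B}|lborel. feature H0 H1 u $ i * feature H0 H1 u $ j)"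
    unfolding ibm_feature_def vector_add_component p0_def[symmetric] p1_def[symmetric]
    by (simp add: algebra_simps set_integral_add_bounded_borel bounded_borel_add bounded_borel_mult b)
  finally show ?thesis .
qed

lemma set_integral_mult_feature:
  assumes H0: "vmeas_ok A B H0" and H1: "vmeas_ok A B H1" and g: "bounded_borel g"
  shows "(LINT u:{0..B}|lborel. g u * feature H0 H1 u $ i)
       = vint A B H0 (\<lambda>t. LINT u:{0..B}|lborel. \<kappa>0 t u * g u) $ i
       + vint A B H1 (\<lambda>t. LINT u:{0..B}|lborel. \<kappa>1 t u * g u) $ i"
  unfolding ibm_feature_def vector_add_component distrib_left
    vint_lborel_swap[OF H0 bounded_kernel_\<kappa>(1) g] vint_lborel_swap[OF H1 bounded_kernel_\<kappa>(2) g]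
  by (intro set_integral_add_bounded_borel bounded_borel_mult g bounded_borel_vint_kernel
      H0 H1 bounded_kernel_\<kappa>)

end

context ibm_regression
begin

lemma feature_zeta_reproduces:
  assumes t: "t \<in> {A..B}"
  shows "(LINT u:{0..B}|lborel. \<kappa>0 t u * feature \<zeta>0 \<zeta>1 u $ k) = fd 0 t $ k"
    and "(LINT u:{0..B}|lborel. \<kappa>1 t u * feature \<zeta>0 \<zeta>1 u $ k) = fd 1 t $ k"
proof -
  have K: "vint A B \<zeta>0 (\<lambda>s. LINT u:{0..B}|lborel. \<kappa>0 s u * \<kappa>0 t u) = vint A B \<zeta>0 (K_ibm a t)"
    "vint A B \<zeta>1 (\<lambda>s. LINT u:{0..B}|lborel. \<kappa>1 s u * \<kappa>0 t u) = vint A B \<zeta>1 (K_01 a t)"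
    "vint A B \<zeta>0 (\<lambda>s. LINT u:{0..B}|lborel. \<kappa>0 s u * \<kappa>1 t u) = vint A B \<zeta>0 (K_10 a t)"
    "vint A B \<zeta>1 (\<lambda>s. LINT u:{0..B}|lborel. \<kappa>1 s u * \<kappa>1 t u) = vint A B \<zeta>1 (K_11 a t)"
    using t by (intro vint_cong vmeas_ok_\<zeta>; simp add: kernel_factorizations mult.commute)+
  show "(LINT u:{0..B}|lborel. \<kappa>0 t u * feature \<zeta>0 \<zeta>1 u $ k) = fd 0 t $ k"
    unfolding set_integral_mult_feature[OF vmeas_ok_\<zeta> bounded_kernel_slices(2)[OF bounded_kernel_\<kappa>(1)]] K
    using zeta_reproduces_f[OF t] by (simp add: vec_eq_iff)
  show "(LINT u:{0..B}|lborel. \<kappa>1 t u * feature \<zeta>0 \<zeta>1 u $ k) = fd 1 t $ k"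
    unfolding set_integral_mult_feature[OF vmeas_ok_\<zeta> bounded_kernel_slices(2)[OF bounded_kernel_\<kappa>(2)]] K
    using zeta_reproduces_f'[OF t] by (simp add: vec_eq_iff)
qed

lemma inner_feature_zeta:
  assumes G0: "vmeas_ok A B G0" and G1: "vmeas_ok A B G1"
  shows "(LINT u:{0..B}|lborel. feature G0 G1 u $ i * feature \<zeta>0 \<zeta>1 u $ k)
       = vint A B G0 (\<lambda>t. fd 0 t $ k) $ i + vint A B G1 (\<lambda>t. fd 1 t $ k) $ i"
proof -
  have z: "bounded_borel (\<lambda>u. feature \<zeta>0 \<zeta>1 u $ k)" by (rule bounded_borel_feature[OF vmeas_ok_\<zeta>])
  have "(LINT u:{0..B}|lborel. feature G0 G1 u $ i * feature \<zeta>0 \<zeta>1 u $ k)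
      = (LINT u:{0..B}|lborel. feature \<zeta>0 \<zeta>1 u $ k * feature G0 G1 u $ i)"
    by (simp add: mult.commute)
  also have "\<dots> = vint A B G0 (\<lambda>t. LINT u:{0..B}|lborel. \<kappa>0 t u * feature \<zeta>0 \<zeta>1 u $ k) $ i
      + vint A B G1 (\<lambda>t. LINT u:{0..B}|lborel. \<kappa>1 t u * feature \<zeta>0 \<zeta>1 u $ k) $ i"
    by (rule set_integral_mult_feature[OF G0 G1 z])
  also have "vint A B G0 (\<lambda>t. LINT u:{0..B}|lborel. \<kappa>0 t u * feature \<zeta>0 \<zeta>1 u $ k) = vint A B G0 (\<lambda>t. fd 0 t $ k)"
    by (rule vint_cong[OF G0]) (rule feature_zeta_reproduces(1))
  also have "vint A B G1 (\<lambda>t. LINT u:{0..B}|lborel. \<kappa>1 t u * feature \<zeta>0 \<zeta>1 u $ k) = vint A B G1 (\<lambda>t. fd 1 t $ k)"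
    by (rule vint_cong[OF G1]) (rule feature_zeta_reproduces(2))
  finally show ?thesis .
qed

abbreviation "C \<equiv> info_matrix a A B fd"

lemma info_matrix_row:
  "C $ k = vint A B \<zeta>0 (\<lambda>t. fd 0 t $ k) + vint A B \<zeta>1 (\<lambda>t. fd 1 t $ k)"
  by (simp add: info_matrix_def vouter_def)

lemma info_matrix_sym: "C $ k $ j = C $ j $ k"
  using inner_feature_zeta[OF vmeas_ok_\<zeta>, of j k] inner_feature_zeta[OF vmeas_ok_\<zeta>, of k j]
  by (simp add: info_matrix_row mult.commute)

end

context ibm_regression
begin

lemma bounded_borel_restrict_fd:
  assumes "n < 4"
  shows "bounded_borel (\<lambda>t. indicator {A..B} t * fd n t $ k)"
proof -
  have "continuous_on {A..B} (fd n)"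
    using fd_deriv assms unfolding continuous_on_eq_continuous_within
    by (blast intro: has_vector_derivative_continuous)
  then have c: "continuous_on {A..B} (\<lambda>t. fd n t $ k)" by (intro continuous_intros)
  then have "compact ((\<lambda>t. fd n t $ k) ` {A..B})" by (rule compact_continuous_image[OF _ compact_Icc])
  then obtain N where N: "\<And>s. s \<in> {A..B} \<Longrightarrow> \<bar>fd n s $ k\<bar> \<le> N"
    using compact_imp_bounded bounded_iff by (metis image_eqI real_norm_def)
  show ?thesis
  proof (rule bounded_borelI)
    show "(\<lambda>t. indicator {A..B} t * fd n t $ k) \<in> borel_measurable borel"
      using borel_measurable_continuous_on_indicator[OF _ c] by simp
    show "\<bar>indicator {A..B} t * fd n t $ k\<bar> \<le> \<bar>N\<bar>" for t
      using N[of t] by (auto simp: indicator_def)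
  qed
qed

lemma vint_restrict:
  "vmeas_ok A B D \<Longrightarrow> vint A B D (\<lambda>t. indicator {A..B} t * F t) = vint A B D F"
  by (rule vint_cong) auto

lemma vint_inner_fd:
  assumes "n < 4" "vmeas_ok A B D"
  shows "vint A B D (\<lambda>t. \<theta> \<bullet> fd n t) = (\<Sum>k\<in>UNIV. \<theta> $ k *\<^sub>R vint A B D (\<lambda>t. fd n t $ k))"
proof -
  have "vint A B D (\<lambda>t. \<theta> \<bullet> fd n t) = vint A B D (\<lambda>t. \<Sum>k\<in>UNIV. \<theta> $ k * (indicator {A..B} t * fd n t $ k))"
    by (rule vint_cong[OF assms(2)]) (simp add: inner_vec_def)
  also have "\<dots> = (\<Sum>k\<in>UNIV. \<theta> $ k *\<^sub>R vint A B D (\<lambda>t. indicator {A..B} t * fd n t $ k))"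
    using assms by (simp add: vint_sum vint_cmult bounded_borel_cmult bounded_borel_restrict_fd)
  finally show ?thesis by (simp add: vint_restrict[OF assms(2)])
qed

lemma vint_mat_vmeas_fd:
  assumes "n < 4" "vmeas_ok A B D"
  shows "vint A B (mat_vmeas M D) (\<lambda>t. fd n t $ k) = M *v vint A B D (\<lambda>t. fd n t $ k)"
  using vint_mat_vmeas[OF assms(2) bounded_borel_restrict_fd[OF assms(1)]]
  by (simp add: vint_restrict assms(2) vmeas_ok_mat_vmeas)

lemma unbiased_iff:
  assumes "vmeas_ok A B G0" "vmeas_ok A B G1"
  shows "unbiased A B (fd 0) (fd 1) G0 G1 \<longleftrightarrow>
    (\<forall>\<theta>. (\<Sum>k\<in>UNIV. \<theta> $ k *\<^sub>R (vint A B G0 (\<lambda>t. fd 0 t $ k) + vint A B G1 (\<lambda>t. fd 1 t $ k))) = \<theta>)"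
  using assms by (simp add: unbiased_def vint_inner_fd sum.distrib scaleR_right_distrib)

lemma feature_mat_vmeas:
  assumes "vmeas_ok A B D0" "vmeas_ok A B D1"
  shows "feature (mat_vmeas M D0) (mat_vmeas M D1) u = M *v feature D0 D1 u"
  unfolding ibm_feature_def
  using vint_mat_vmeas[OF assms(1) bounded_kernel_slices(1)[OF bounded_kernel_\<kappa>(1)]]
    vint_mat_vmeas[OF assms(2) bounded_kernel_slices(1)[OF bounded_kernel_\<kappa>(2)]]
  by (simp add: matrix_vector_right_distrib)

end

context ibm_regression
begin

abbreviation "H0 \<equiv> mat_vmeas (matrix_inv C) \<zeta>0"
abbreviation "H1 \<equiv> mat_vmeas (matrix_inv C) \<zeta>1"

lemma vmeas_ok_H: "vmeas_ok A B H0" "vmeas_ok A B H1"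
  by (simp_all add: vmeas_ok_mat_vmeas vmeas_ok_\<zeta>)

lemma unbiased_H:
  assumes "invertible C"
  shows "unbiased A B (fd 0) (fd 1) H0 H1"
  unfolding unbiased_iff[OF vmeas_ok_H]
proof
  fix \<theta> :: "real^'m"
  have "(\<Sum>k\<in>UNIV. \<theta> $ k *\<^sub>R (vint A B H0 (\<lambda>t. fd 0 t $ k) + vint A B H1 (\<lambda>t. fd 1 t $ k)))
      = matrix_inv C *v (\<Sum>k\<in>UNIV. \<theta> $ k *\<^sub>R C $ k)"
    by (simp add: vint_mat_vmeas_fd vmeas_ok_\<zeta> info_matrix_row matrix_vector_right_distrib
        vec.sum matrix_vector_mult_scaleR)
  also have "(\<Sum>k\<in>UNIV. \<theta> $ k *\<^sub>R C $ k) = C *v \<theta>"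
    by (simp add: vec_eq_iff matrix_vector_mult_def sum_component info_matrix_sym mult.commute)
  also have "matrix_inv C *v (C *v \<theta>) = \<theta>"
    by (simp add: matrix_vector_mul_assoc matrix_inv_mult_left[OF assms])
  finally show "(\<Sum>k\<in>UNIV. \<theta> $ k *\<^sub>R (vint A B H0 (\<lambda>t. fd 0 t $ k) + vint A B H1 (\<lambda>t. fd 1 t $ k))) = \<theta>" .
qed

lemma inner_feature_H:
  assumes G0: "vmeas_ok A B G0" and G1: "vmeas_ok A B G1" and G: "unbiased A B (fd 0) (fd 1) G0 G1"
  shows "(LINT u:{0..B}|lborel. feature G0 G1 u $ i * feature H0 H1 u $ j) = matrix_inv C $ j $ i"
proof -
  let ?z = "\<lambda>k u. feature \<zeta>0 \<zeta>1 u $ k" and ?g = "\<lambda>u. feature G0 G1 u $ i"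
  have b: "bounded_borel (\<lambda>u. matrix_inv C $ j $ k * (?g u * ?z k u))" for k
    by (intro bounded_borel_cmult bounded_borel_mult bounded_borel_feature G0 G1 vmeas_ok_\<zeta>)
  have "(LINT u:{0..B}|lborel. ?g u * feature H0 H1 u $ j)
      = (LINT u:{0..B}|lborel. \<Sum>k\<in>UNIV. matrix_inv C $ j $ k * (?g u * ?z k u))"
    by (simp add: feature_mat_vmeas vmeas_ok_\<zeta> matrix_vector_mult_def sum_distrib_left mult_ac)
  also have "\<dots> = (\<Sum>k\<in>UNIV. matrix_inv C $ j $ k *
      (vint A B G0 (\<lambda>t. fd 0 t $ k) $ i + vint A B G1 (\<lambda>t. fd 1 t $ k) $ i))"
    by (simp add: set_integral_sum_bounded_borel b inner_feature_zeta[OF G0 G1])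
  also have "\<dots> = (\<Sum>k\<in>UNIV. matrix_inv C $ j $ k *\<^sub>R
      (vint A B G0 (\<lambda>t. fd 0 t $ k) + vint A B G1 (\<lambda>t. fd 1 t $ k))) $ i"
    by (simp add: sum_component)
  also have "\<dots> = matrix_inv C $ j $ i"
    using G unfolding unbiased_iff[OF G0 G1] by simp
  finally show ?thesis .
qed

lemma matrix_inv_info_matrix_sym:
  assumes "invertible C"
  shows "matrix_inv C $ j $ i = matrix_inv C $ i $ j"
  using inner_feature_H[OF vmeas_ok_H unbiased_H[OF assms], of i j]
    inner_feature_H[OF vmeas_ok_H unbiased_H[OF assms], of j i]
  by (simp add: mult.commute)

lemma est_cov_H:
  assumes "invertible C"
  shows "est_cov a A B H0 H1 = matrix_inv C"
  by (simp add: vec_eq_iff est_cov_eq_inner_feature[OF vmeas_ok_H] inner_feature_H[OF vmeas_ok_H unbiased_H[OF assms]]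
      matrix_inv_info_matrix_sym[OF assms])

lemma est_cov_H_loewner_le:
  assumes C: "invertible C"
    and G0: "vmeas_ok A B G0" and G1: "vmeas_ok A B G1" and G: "unbiased A B (fd 0) (fd 1) G0 G1"
  shows "loewner_le (est_cov a A B H0 H1) (est_cov a A B G0 G1)"
  unfolding loewner_le_def
proof
  fix v :: "real^'m"
  define wG where "wG u = (\<Sum>i\<in>UNIV. v $ i * feature G0 G1 u $ i)" for u
  define wH where "wH u = (\<Sum>i\<in>UNIV. v $ i * feature H0 H1 u $ i)" for u
  have bG: "bounded_borel wG" and bH: "bounded_borel wH"
    unfolding wG_def[abs_def] wH_def[abs_def]
    by (intro bounded_borel_sum bounded_borel_cmult bounded_borel_feature G0 G1 vmeas_ok_H; simp)+
  have GG: "v \<bullet> (est_cov a A B G0 G1 *v v) = (LINT u:{0..B}|lborel. wG u * wG u)"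
    unfolding wG_def
    by (rule quadratic_form_set_integral) (simp_all add: est_cov_eq_inner_feature G0 G1 bounded_borel_feature)
  have HH: "v \<bullet> (est_cov a A B H0 H1 *v v) = (LINT u:{0..B}|lborel. wH u * wH u)"
    unfolding wH_def
    by (rule quadratic_form_set_integral) (simp_all add: est_cov_eq_inner_feature vmeas_ok_H bounded_borel_feature)
  have GH: "v \<bullet> (est_cov a A B H0 H1 *v v) = (LINT u:{0..B}|lborel. wG u * wH u)"
    unfolding wG_def wH_def est_cov_H[OF C]
    by (rule quadratic_form_set_integral)
      (simp_all add: inner_feature_H[OF G0 G1 G] matrix_inv_info_matrix_sym[OF C] bounded_borel_feature
        G0 G1 vmeas_ok_H)
  have "0 \<le> (LINT u:{0..B}|lborel. (wG u - wH u)\<^sup>2)"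
    by (simp add: set_lebesgue_integral_def indicator_def Bochner_Integration.integral_nonneg)
  also have "\<dots> = (LINT u:{0..B}|lborel. wG u * wG u + (- 2) * (wG u * wH u) + wH u * wH u)"
    by (simp add: power2_eq_square algebra_simps)
  also have "\<dots> = (LINT u:{0..B}|lborel. wG u * wG u) + (- 2) * (LINT u:{0..B}|lborel. wG u * wH u)
      + (LINT u:{0..B}|lborel. wH u * wH u)"
  proof -
    have b: "bounded_borel (\<lambda>u. wG u * wG u)" "bounded_borel (\<lambda>u. (- 2) * (wG u * wH u))"
      "bounded_borel (\<lambda>u. wH u * wH u)"
      by (intro bounded_borel_mult bounded_borel_cmult bG bH)+
    show ?thesis
      by (simp only: set_integral_add_bounded_borel[OF bounded_borel_add[OF b(1,2)] b(3)]
          set_integral_add_bounded_borel[OF b(1,2)] set_integral_mult_right)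
  qed
  finally show "v \<bullet> (est_cov a A B H0 H1 *v v) \<le> v \<bullet> (est_cov a A B G0 G1 *v v)"
    unfolding GG HH GH[symmetric] by simp
qed

end

theorem proposition3p1:
  fixes a A B :: real and fd :: "nat \<Rightarrow> real \<Rightarrow> real^'m::finite"
  assumes "0 \<le> a" and "a < A" and "A < B"
    and "\<forall>k<4. \<forall>t\<in>{A..B}. (fd k has_vector_derivative fd (Suc k) t) (at t within {A..B})"
    and "set_integrable lborel {A..B} (fd 4)"
    and "invertible (vouter A B (fd 0) (zeta0 a A B fd) + vouter A B (fd 1) (zeta1 a A B fd))"
  shows "let C = vouter A B (fd 0) (zeta0 a A B fd) + vouter A B (fd 1) (zeta1 a A B fd);
             G0 = mat_vmeas (matrix_inv C) (zeta0 a A B fd);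
             G1 = mat_vmeas (matrix_inv C) (zeta1 a A B fd)
         in is_BLUE a A B (fd 0) (fd 1) G0 G1 \<and> est_cov a A B G0 G1 = matrix_inv C"
proof -
  interpret ibm_regression a A B fd using assms(1-5) by unfold_locales
  have C: "invertible (info_matrix a A B fd)" using assms(6) by (simp add: info_matrix_def)
  show ?thesis
    unfolding Let_def is_BLUE_def info_matrix_def[symmetric]
    using vmeas_ok_H unbiased_H[OF C] est_cov_H[OF C] est_cov_H_loewner_le[OF C] by blast
qed

end
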